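(* Let $A$ be a factorizable ribbon Hopf algebra with ribbon element $v$. Then for all $a\in A$, $\underline{S}^2(a)=S(v_{(1)})\,a\,v_{(2)}$, i.e. $\underline S^2$ is the right adjoint action of $v$.
   Context: Let $K$ be a field and $A$ a finite-dimensional Hopf algebra over $K$ with coproduct $\Delta(a)=a_{(1)}\otimes a_{(2)}$, counit $\varepsilon$ and bijective antipode $S$. $A$ is quasitriangular with R-matrix $R=R_1\otimes R_2$ ($R'$ a second copy): $R$ invertible, $\Delta^{\mathrm{cop}}(a)=R\Delta(a)R^{-1}$, $(\Delta\otimes\mathrm{id})(R)=R_{13}R_{23}$, $(\mathrm{id}\otimes\Delta)(R)=R_{13}R_{12}$. Monodromy matrix $Q=\tau(R)R=R_2R'_1\otimes R_1R'_2=Q_1\otimes Q_2$. Drinfel'd element $u=S(R_2)R_1$. A ribbon element (convention of this paper) is a central invertible $v\in A$ with $S(v)=v$, $\varepsilon(v)=1$, $v^2=(uS(u))^{-1}$ and $\Delta(v)=(v\otimes v)Q$. $A$ is factorizable if $A^*\to A$, $\varphi\mapsto\varphi(Q_1)Q_2$ is bijective. The transmutation antipode is $\underline{S}(a)=S\big(S(R_{1(1)})aR_{1(2)}\big)R_2$, equivalently $\underline{S}(a)=R_1S(a)S(R_2)S(u^{-1})$. *)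

theory Defs
  imports Main
begin

text \<open>A finite-dimensional Hopf algebra over a field 'k is encoded by structure
constants with respect to a fixed basis indexed by the finite type 'i.
Elements of A are coordinate vectors 'i => 'k, elements of A (x) A are
'i => 'i => 'k, elements of A (x) A (x) A are 'i => 'i => 'i => 'k.
The dual space A* is identified with 'i => 'k via values on the basis.\<close>

record ('k, 'i) hopf =
  mu     :: "'i \<Rightarrow> 'i \<Rightarrow> 'i \<Rightarrow> 'k"   (* e_i e_j = sum_k mu i j k e_k *)
  unit   :: "'i \<Rightarrow> 'k"
  delta  :: "'i \<Rightarrow> 'i \<Rightarrow> 'i \<Rightarrow> 'k"   (* Delta e_k = sum_{i,j} delta k i j e_i (x) e_j *)
  counit :: "'i \<Rightarrow> 'k"
  antip  :: "'i \<Rightarrow> 'i \<Rightarrow> 'k"             (* S e_i = sum_j antip i j e_j *)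

definition bvec :: "'i \<Rightarrow> 'i \<Rightarrow> 'k::field" where
  "bvec i = (\<lambda>j. if j = i then 1 else 0)"

definition vmul :: "('k::field, 'i::finite) hopf \<Rightarrow> ('i \<Rightarrow> 'k) \<Rightarrow> ('i \<Rightarrow> 'k) \<Rightarrow> ('i \<Rightarrow> 'k)" where
  "vmul H x y = (\<lambda>k. \<Sum>i\<in>UNIV. \<Sum>j\<in>UNIV. x i * y j * mu H i j k)"

definition vone :: "('k::field, 'i::finite) hopf \<Rightarrow> 'i \<Rightarrow> 'k" where
  "vone H = unit H"

definition vDelta :: "('k::field, 'i::finite) hopf \<Rightarrow> ('i \<Rightarrow> 'k) \<Rightarrow> ('i \<Rightarrow> 'i \<Rightarrow> 'k)" where
  "vDelta H x = (\<lambda>i j. \<Sum>k\<in>UNIV. x k * delta H k i j)"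

definition veps :: "('k::field, 'i::finite) hopf \<Rightarrow> ('i \<Rightarrow> 'k) \<Rightarrow> 'k" where
  "veps H x = (\<Sum>i\<in>UNIV. x i * counit H i)"

definition vS :: "('k::field, 'i::finite) hopf \<Rightarrow> ('i \<Rightarrow> 'k) \<Rightarrow> ('i \<Rightarrow> 'k)" where
  "vS H x = (\<lambda>j. \<Sum>i\<in>UNIV. x i * antip H i j)"

definition tens :: "('i \<Rightarrow> 'k::field) \<Rightarrow> ('i \<Rightarrow> 'k) \<Rightarrow> ('i \<Rightarrow> 'i \<Rightarrow> 'k)" where
  "tens x y = (\<lambda>i j. x i * y j)"

definition tau :: "('i \<Rightarrow> 'i \<Rightarrow> 'k) \<Rightarrow> ('i \<Rightarrow> 'i \<Rightarrow> 'k)" where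
  "tau X = (\<lambda>i j. X j i)"

definition tmul :: "('k::field, 'i::finite) hopf \<Rightarrow> ('i \<Rightarrow> 'i \<Rightarrow> 'k) \<Rightarrow> ('i \<Rightarrow> 'i \<Rightarrow> 'k) \<Rightarrow> ('i \<Rightarrow> 'i \<Rightarrow> 'k)" where
  "tmul H X Y = (\<lambda>k l. \<Sum>i\<in>UNIV. \<Sum>j\<in>UNIV. \<Sum>i'\<in>UNIV. \<Sum>j'\<in>UNIV.
      X i j * Y i' j' * mu H i i' k * mu H j j' l)"

definition tone :: "('k::field, 'i::finite) hopf \<Rightarrow> 'i \<Rightarrow> 'i \<Rightarrow> 'k" where
  "tone H = tens (vone H) (vone H)"

definition t3mul :: "('k::field, 'i::finite) hopf \<Rightarrow> ('i \<Rightarrow> 'i \<Rightarrow> 'i \<Rightarrow> 'k) \<Rightarrow> ('i \<Rightarrow> 'i \<Rightarrow> 'i \<Rightarrow> 'k)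
    \<Rightarrow> ('i \<Rightarrow> 'i \<Rightarrow> 'i \<Rightarrow> 'k)" where
  "t3mul H X Y = (\<lambda>k l m. \<Sum>i\<in>UNIV. \<Sum>j\<in>UNIV. \<Sum>p\<in>UNIV. \<Sum>i'\<in>UNIV. \<Sum>j'\<in>UNIV. \<Sum>p'\<in>UNIV.
      X i j p * Y i' j' p' * mu H i i' k * mu H j j' l * mu H p p' m)"

definition Delta_id :: "('k::field, 'i::finite) hopf \<Rightarrow> ('i \<Rightarrow> 'i \<Rightarrow> 'k) \<Rightarrow> ('i \<Rightarrow> 'i \<Rightarrow> 'i \<Rightarrow> 'k)" where
  "Delta_id H X = (\<lambda>a b c. \<Sum>k\<in>UNIV. X k c * delta H k a b)"

definition id_Delta :: "('k::field, 'i::finite) hopf \<Rightarrow> ('i \<Rightarrow> 'i \<Rightarrow> 'k) \<Rightarrow> ('i \<Rightarrow> 'i \<Rightarrow> 'i \<Rightarrow> 'k)" where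
  "id_Delta H X = (\<lambda>a b c. \<Sum>k\<in>UNIV. X a k * delta H k b c)"

text \<open>Apply a bilinear map f : A x A -> A to a tensor X in A (x) A, i.e. the linear
map A (x) A -> A induced by f.  With Sweedler-type notation X = X_1 (x) X_2 this is f(X_1, X_2).\<close>

definition bilin_apply :: "(('i \<Rightarrow> 'k::field) \<Rightarrow> ('i \<Rightarrow> 'k) \<Rightarrow> ('i \<Rightarrow> 'k)) \<Rightarrow> ('i::finite \<Rightarrow> 'i \<Rightarrow> 'k) \<Rightarrow> ('i \<Rightarrow> 'k)" where
  "bilin_apply f X = (\<lambda>k. \<Sum>i\<in>UNIV. \<Sum>j\<in>UNIV. X i j * f (bvec i) (bvec j) k)"

definition is_hopf :: "('k::field, 'i::finite) hopf \<Rightarrow> bool" where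
  "is_hopf H \<longleftrightarrow>
     (\<forall>x y z. vmul H (vmul H x y) z = vmul H x (vmul H y z)) \<and>
     (\<forall>x. vmul H (vone H) x = x \<and> vmul H x (vone H) = x) \<and>
     (\<forall>x. Delta_id H (vDelta H x) = id_Delta H (vDelta H x)) \<and>
     (\<forall>x. (\<lambda>j. \<Sum>i\<in>UNIV. counit H i * vDelta H x i j) = x) \<and>
     (\<forall>x. (\<lambda>i. \<Sum>j\<in>UNIV. vDelta H x i j * counit H j) = x) \<and>
     (\<forall>x y. vDelta H (vmul H x y) = tmul H (vDelta H x) (vDelta H y)) \<and>
     vDelta H (vone H) = tone H \<and>
     (\<forall>x y. veps H (vmul H x y) = veps H x * veps H y) \<and>
     veps H (vone H) = 1 \<and>
     (\<forall>x. bilin_apply (\<lambda>p q. vmul H (vS H p) q) (vDelta H x) = (\<lambda>k. veps H x * vone H k)) \<and>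
     (\<forall>x. bilin_apply (\<lambda>p q. vmul H p (vS H q)) (vDelta H x) = (\<lambda>k. veps H x * vone H k))"

definition R13 :: "('k::field, 'i::finite) hopf \<Rightarrow> ('i \<Rightarrow> 'i \<Rightarrow> 'k) \<Rightarrow> ('i \<Rightarrow> 'i \<Rightarrow> 'i \<Rightarrow> 'k)" where
  "R13 H R = (\<lambda>a b c. R a c * vone H b)"
definition R23 :: "('k::field, 'i::finite) hopf \<Rightarrow> ('i \<Rightarrow> 'i \<Rightarrow> 'k) \<Rightarrow> ('i \<Rightarrow> 'i \<Rightarrow> 'i \<Rightarrow> 'k)" where
  "R23 H R = (\<lambda>a b c. vone H a * R b c)"
definition R12 :: "('k::field, 'i::finite) hopf \<Rightarrow> ('i \<Rightarrow> 'i \<Rightarrow> 'k) \<Rightarrow> ('i \<Rightarrow> 'i \<Rightarrow> 'i \<Rightarrow> 'k)" where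
  "R12 H R = (\<lambda>a b c. R a b * vone H c)"

definition quasitriangular :: "('k::field, 'i::finite) hopf \<Rightarrow> ('i \<Rightarrow> 'i \<Rightarrow> 'k) \<Rightarrow> bool" where
  "quasitriangular H R \<longleftrightarrow>
     (\<exists>Rinv. tmul H R Rinv = tone H \<and> tmul H Rinv R = tone H \<and>
        (\<forall>a. tau (vDelta H a) = tmul H (tmul H R (vDelta H a)) Rinv)) \<and>
     Delta_id H R = t3mul H (R13 H R) (R23 H R) \<and>
     id_Delta H R = t3mul H (R13 H R) (R12 H R)"

definition monodromy :: "('k::field, 'i::finite) hopf \<Rightarrow> ('i \<Rightarrow> 'i \<Rightarrow> 'k) \<Rightarrow> ('i \<Rightarrow> 'i \<Rightarrow> 'k)" where
  "monodromy H R = tmul H (tau R) R"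

definition drinfeld :: "('k::field, 'i::finite) hopf \<Rightarrow> ('i \<Rightarrow> 'i \<Rightarrow> 'k) \<Rightarrow> ('i \<Rightarrow> 'k)" where
  "drinfeld H R = bilin_apply (\<lambda>p q. vmul H (vS H q) p) R"

definition ribbon :: "('k::field, 'i::finite) hopf \<Rightarrow> ('i \<Rightarrow> 'i \<Rightarrow> 'k) \<Rightarrow> ('i \<Rightarrow> 'k) \<Rightarrow> bool" where
  "ribbon H R v \<longleftrightarrow>
     (\<forall>a. vmul H v a = vmul H a v) \<and>
     (\<exists>w. vmul H v w = vone H \<and> vmul H w v = vone H) \<and>
     vS H v = v \<and> veps H v = 1 \<and>
     (let w = vmul H (drinfeld H R) (vS H (drinfeld H R)) in
        vmul H (vmul H v v) w = vone H \<and> vmul H w (vmul H v v) = vone H) \<and>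
     vDelta H v = tmul H (tens v v) (monodromy H R)"

definition factorizable :: "('k::field, 'i::finite) hopf \<Rightarrow> ('i \<Rightarrow> 'i \<Rightarrow> 'k) \<Rightarrow> bool" where
  "factorizable H R \<longleftrightarrow> bij (\<lambda>\<phi>::'i \<Rightarrow> 'k. \<lambda>j. \<Sum>i\<in>UNIV. monodromy H R i j * \<phi> i)"

text \<open>Transmutation antipode  S_(a) = S(S(R_{1(1)}) a R_{1(2)}) R_2.\<close>

definition tS :: "('k::field, 'i::finite) hopf \<Rightarrow> ('i \<Rightarrow> 'i \<Rightarrow> 'k) \<Rightarrow> ('i \<Rightarrow> 'k) \<Rightarrow> ('i \<Rightarrow> 'k)" where
  "tS H R a = bilin_apply
     (\<lambda>p q. vmul H (vS H (bilin_apply (\<lambda>x y. vmul H (vmul H (vS H x) a) y) (vDelta H p))) q) R"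

end

theory Submission
  imports Defs
begin

text \<open>
  Write \<open>R = R\<^sub>1 \<otimes> R\<^sub>2\<close> and let \<open>u = S(R\<^sub>2) R\<^sub>1\<close> be the Drinfel'd element. It satisfies
  \<open>u y = S\<^sup>2(y) u\<close> and is invertible with inverse \<open>S(w)\<close>, where \<open>w = S\<^sup>2(R\<^sub>1) R\<^sub>2\<close>.
  Expanding \<open>\<Delta>(R\<^sub>1)\<close> by \<open>(\<Delta> \<otimes> id) R = R\<^sub>1\<^sub>3 R\<^sub>2\<^sub>3\<close> turns the transmutation antipode into
  \<open>tS(a) = S(R\<^sub>1) S(a) w R\<^sub>2\<close>; hence \<open>S(tS(a)) = S(R\<^sub>2) a R\<^sub>1 S(w)\<close>, since
  \<open>u\<^sup>-\<^sup>1 S\<^sup>2(y) = y u\<^sup>-\<^sup>1\<close>, and \<open>tS(tS(a)) = S(R'\<^sub>1) S(R\<^sub>2) a R\<^sub>1 S(w) w R'\<^sub>2\<close>.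
  For a ribbon element \<open>S(w) w = u\<^sup>-\<^sup>1 S(u)\<^sup>-\<^sup>1 = v\<^sup>2\<close> is central, and
  \<open>\<Delta>(v) = (v \<otimes> v) Q\<close> with \<open>Q = R\<^sub>2 R'\<^sub>1 \<otimes> R\<^sub>1 R'\<^sub>2\<close> gives
  \<open>S(v\<^sub>(\<^sub>1\<^sub>)) a v\<^sub>(\<^sub>2\<^sub>) = S(R'\<^sub>1) S(R\<^sub>2) a R\<^sub>1 R'\<^sub>2 v\<^sup>2\<close> as well.
\<close>

definition lin :: "(('i::finite \<Rightarrow> 'k::field) \<Rightarrow> ('j \<Rightarrow> 'k)) \<Rightarrow> bool" where
  "lin f \<longleftrightarrow> (\<forall>x y. f (\<lambda>k. x k + y k) = (\<lambda>k. f x k + f y k)) \<and>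
     (\<forall>c x. f (\<lambda>k. c * x k) = (\<lambda>k. c * f x k))"

lemma linI:
  assumes "\<And>x y. f (\<lambda>k. x k + y k) = (\<lambda>k. f x k + f y k)"
    and "\<And>c x. f (\<lambda>k. c * x k) = (\<lambda>k. c * f x k)"
  shows "lin f"
  using assms unfolding lin_def by blast

lemma lin_add: "lin f \<Longrightarrow> f (\<lambda>k. x k + y k) = (\<lambda>k. f x k + f y k)"
  unfolding lin_def by blast

lemma lin_scale: "lin f \<Longrightarrow> f (\<lambda>k. c * x k) = (\<lambda>k. c * f x k)"
  unfolding lin_def by blast

lemma lin_zero: "lin f \<Longrightarrow> f (\<lambda>k. 0) = (\<lambda>k. 0)"
  using lin_scale[of f 0 "\<lambda>k. 0"] by simp

lemma lin_sum:
  assumes "lin f" "finite A"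
  shows "f (\<lambda>k. \<Sum>i\<in>A. h i k) = (\<lambda>k. \<Sum>i\<in>A. f (h i) k)"
  using assms(2)
proof induct
  case empty
  then show ?case using lin_zero[OF assms(1)] by simp
next
  case (insert a A)
  have "f (\<lambda>k. \<Sum>i\<in>insert a A. h i k) = f (\<lambda>k. h a k + (\<Sum>i\<in>A. h i k))"
    using insert by simp
  also have "\<dots> = (\<lambda>k. f (h a) k + f (\<lambda>k. \<Sum>i\<in>A. h i k) k)"
    using lin_add[OF assms(1), of "h a" "\<lambda>k. \<Sum>i\<in>A. h i k"] by simp
  finally show ?case using insert by simp
qed

lemma sum_bvec_mult: "(\<Sum>i\<in>UNIV. bvec (k::'i::finite) i * f i) = (f k :: 'k::field)"
  by (simp add: bvec_def if_distrib[of "\<lambda>x. x * _"] cong: if_cong)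

lemma sum_mult_bvec: "(\<Sum>i\<in>UNIV. f i * bvec i (k::'i::finite)) = (f k :: 'k::field)"
  by (simp add: bvec_def if_distrib[of "\<lambda>x. _ * x"] cong: if_cong)

lemma lin_expand:
  assumes "lin f"
  shows "f x = (\<lambda>k. \<Sum>i\<in>UNIV. x i * f (bvec i) k)"
proof -
  have "f x = f (\<lambda>k. \<Sum>i\<in>UNIV. x i * bvec i k)"
    by (simp add: sum_mult_bvec)
  also have "\<dots> = (\<lambda>k. \<Sum>i\<in>UNIV. f (\<lambda>k. x i * bvec i k) k)"
    by (rule lin_sum[OF assms]) simp
  also have "\<dots> = (\<lambda>k. \<Sum>i\<in>UNIV. x i * f (bvec i) k)"
    by (simp add: lin_scale[OF assms])
  finally show ?thesis .
qed

lemma lin_id: "lin (\<lambda>x. x)"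
  by (rule linI) auto

lemma lin_comp: "lin g \<Longrightarrow> lin f \<Longrightarrow> lin (\<lambda>x. g (f x))"
  by (rule linI) (auto simp: lin_add lin_scale)

lemma lin_scaleI: "lin f \<Longrightarrow> lin (\<lambda>x k. a * f x k)"
  by (rule linI) (auto simp: lin_add lin_scale algebra_simps)

lemma lin_vmul1: "lin f \<Longrightarrow> lin (\<lambda>x. vmul H (f x) c)"
  by (rule linI) (auto simp: vmul_def lin_add lin_scale algebra_simps sum.distrib sum_distrib_left)

lemma lin_vmul2: "lin f \<Longrightarrow> lin (\<lambda>x. vmul H c (f x))"
  by (rule linI) (auto simp: vmul_def lin_add lin_scale algebra_simps sum.distrib sum_distrib_left)

lemma lin_vS: "lin f \<Longrightarrow> lin (\<lambda>x. vS H (f x))"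
  by (rule linI) (auto simp: vS_def lin_add lin_scale algebra_simps sum.distrib sum_distrib_left)

lemma lin_veps_mult: "lin f \<Longrightarrow> lin (\<lambda>x k. veps H (f x) * c k)"
  by (rule linI) (auto simp: veps_def lin_add lin_scale algebra_simps sum.distrib sum_distrib_left)

definition bilin :: "(('i::finite \<Rightarrow> 'k::field) \<Rightarrow> ('i \<Rightarrow> 'k) \<Rightarrow> ('j \<Rightarrow> 'k)) \<Rightarrow> bool" where
  "bilin F \<longleftrightarrow> (\<forall>x. lin (F x)) \<and> (\<forall>y. lin (\<lambda>x. F x y))"

lemma bilinI: "(\<And>x. lin (\<lambda>y. F x y)) \<Longrightarrow> (\<And>y. lin (\<lambda>x. F x y)) \<Longrightarrow> bilin F"
  unfolding bilin_def by auto

lemma bilin_lin_left: "bilin F \<Longrightarrow> lin f \<Longrightarrow> lin (\<lambda>x. F (f x) c)"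
  unfolding bilin_def by (rule lin_comp[of "\<lambda>x. F x c" f]) auto

lemma bilin_lin_right: "bilin F \<Longrightarrow> lin f \<Longrightarrow> lin (\<lambda>x. F c (f x))"
  unfolding bilin_def by (rule lin_comp[of "F c" f]) auto

lemma bilin_expand:
  assumes "bilin F"
  shows "F x y = (\<lambda>c. \<Sum>i\<in>UNIV. \<Sum>j\<in>UNIV. x i * y j * F (bvec i) (bvec j) c)"
proof -
  have l1: "lin (\<lambda>x. F x y)" for y using assms unfolding bilin_def by auto
  have l2: "lin (F x)" for x using assms unfolding bilin_def by auto
  have "F x y = (\<lambda>c. \<Sum>i\<in>UNIV. x i * F (bvec i) y c)"
    using lin_expand[OF l1[of y], of x] by simp
  also have "\<dots> = (\<lambda>c. \<Sum>i\<in>UNIV. x i * (\<Sum>j\<in>UNIV. y j * F (bvec i) (bvec j) c))"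
  proof -
    have e2: "F (bvec i) y = (\<lambda>c. \<Sum>j\<in>UNIV. y j * F (bvec i) (bvec j) c)" for i
      by (rule lin_expand[OF l2])
    show ?thesis by (simp only: e2)
  qed
  finally show ?thesis by (simp add: sum_distrib_left mult.assoc)
qed

definition trilin :: "(('i::finite \<Rightarrow> 'k::field) \<Rightarrow> ('i \<Rightarrow> 'k) \<Rightarrow> ('i \<Rightarrow> 'k) \<Rightarrow> ('j \<Rightarrow> 'k)) \<Rightarrow> bool" where
  "trilin F \<longleftrightarrow> (\<forall>x y. lin (F x y)) \<and> (\<forall>x z. lin (\<lambda>y. F x y z)) \<and> (\<forall>y z. lin (\<lambda>x. F x y z))"

lemma trilinI: "(\<And>x y. lin (\<lambda>z. F x y z)) \<Longrightarrow> (\<And>x z. lin (\<lambda>y. F x y z)) \<Longrightarrow> (\<And>y z. lin (\<lambda>x. F x y z)) \<Longrightarrow> trilin F"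
  unfolding trilin_def by auto

lemma trilin_expand:
  assumes "trilin F"
  shows "F x y z = (\<lambda>c. \<Sum>i\<in>UNIV. \<Sum>j\<in>UNIV. \<Sum>p\<in>UNIV. x i * y j * z p * F (bvec i) (bvec j) (bvec p) c)"
proof -
  have l1: "lin (\<lambda>x. F x y z)" for y z using assms unfolding trilin_def by auto
  have l2: "lin (\<lambda>y. F x y z)" for x z using assms unfolding trilin_def by auto
  have l3: "lin (F x y)" for x y using assms unfolding trilin_def by auto
  have "F x y z = (\<lambda>c. \<Sum>i\<in>UNIV. x i * F (bvec i) y z c)"
    using lin_expand[OF l1[of y z], of x] by simp
  also have "\<dots> = (\<lambda>c. \<Sum>i\<in>UNIV. x i * (\<Sum>j\<in>UNIV. y j * F (bvec i) (bvec j) z c))"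
  proof -
    have e2: "F (bvec i) y z = (\<lambda>c. \<Sum>j\<in>UNIV. y j * F (bvec i) (bvec j) z c)" for i
      using lin_expand[OF l2[of "bvec i" z], of y] by simp
    show ?thesis by (simp only: e2)
  qed
  also have "\<dots> = (\<lambda>c. \<Sum>i\<in>UNIV. x i * (\<Sum>j\<in>UNIV. y j * (\<Sum>p\<in>UNIV. z p * F (bvec i) (bvec j) (bvec p) c)))"
  proof -
    have e3: "F (bvec i) (bvec j) z = (\<lambda>c. \<Sum>p\<in>UNIV. z p * F (bvec i) (bvec j) (bvec p) c)" for i j
      by (rule lin_expand[OF l3])
    show ?thesis by (simp only: e3)
  qed
  finally show ?thesis by (simp add: sum_distrib_left mult.assoc)
qed

lemma sum_swap_pairs: "(\<Sum>i\<in>A. \<Sum>j\<in>B. \<Sum>k\<in>C. \<Sum>l\<in>D. f i j k l) = (\<Sum>k\<in>C. \<Sum>l\<in>D. \<Sum>i\<in>A. \<Sum>j\<in>B. f i j k l)"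
proof -
  have "(\<Sum>i\<in>A. \<Sum>j\<in>B. \<Sum>k\<in>C. \<Sum>l\<in>D. f i j k l) = (\<Sum>i\<in>A. \<Sum>k\<in>C. \<Sum>j\<in>B. \<Sum>l\<in>D. f i j k l)"
    by (rule sum.cong[OF refl], rule sum.swap)
  also have "\<dots> = (\<Sum>i\<in>A. \<Sum>k\<in>C. \<Sum>l\<in>D. \<Sum>j\<in>B. f i j k l)"
    by (rule sum.cong[OF refl], rule sum.cong[OF refl], rule sum.swap)
  also have "\<dots> = (\<Sum>k\<in>C. \<Sum>i\<in>A. \<Sum>l\<in>D. \<Sum>j\<in>B. f i j k l)"
    by (rule sum.swap)
  also have "\<dots> = (\<Sum>k\<in>C. \<Sum>l\<in>D. \<Sum>i\<in>A. \<Sum>j\<in>B. f i j k l)"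
    by (rule sum.cong[OF refl], rule sum.swap)
  finally show ?thesis .
qed

lemma sum_swap_single_triple: "(\<Sum>i\<in>A. \<Sum>j\<in>B. \<Sum>p\<in>C. \<Sum>x\<in>D. h i j p x) = (\<Sum>x\<in>D. \<Sum>i\<in>A. \<Sum>j\<in>B. \<Sum>p\<in>C. h i j p x)"
proof -
  have "(\<Sum>i\<in>A. \<Sum>j\<in>B. \<Sum>p\<in>C. \<Sum>x\<in>D. h i j p x) = (\<Sum>i\<in>A. \<Sum>j\<in>B. \<Sum>x\<in>D. \<Sum>p\<in>C. h i j p x)"
    by (rule sum.cong[OF refl], rule sum.cong[OF refl], rule sum.swap)
  also have "\<dots> = (\<Sum>i\<in>A. \<Sum>x\<in>D. \<Sum>j\<in>B. \<Sum>p\<in>C. h i j p x)"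
    by (rule sum.cong[OF refl], rule sum.swap)
  also have "\<dots> = (\<Sum>x\<in>D. \<Sum>i\<in>A. \<Sum>j\<in>B. \<Sum>p\<in>C. h i j p x)"
    by (rule sum.swap)
  finally show ?thesis .
qed

lemma sum_swap_triples: "(\<Sum>i\<in>A. \<Sum>j\<in>B. \<Sum>p\<in>C. \<Sum>x\<in>D. \<Sum>y\<in>E. \<Sum>z\<in>F. h i j p x y z) =
   (\<Sum>x\<in>D. \<Sum>y\<in>E. \<Sum>z\<in>F. \<Sum>i\<in>A. \<Sum>j\<in>B. \<Sum>p\<in>C. h i j p x y z)"
proof -
  have "(\<Sum>i\<in>A. \<Sum>j\<in>B. \<Sum>p\<in>C. \<Sum>x\<in>D. \<Sum>y\<in>E. \<Sum>z\<in>F. h i j p x y z) =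
     (\<Sum>x\<in>D. \<Sum>i\<in>A. \<Sum>j\<in>B. \<Sum>p\<in>C. \<Sum>y\<in>E. \<Sum>z\<in>F. h i j p x y z)" by (rule sum_swap_single_triple)
  also have "\<dots> = (\<Sum>x\<in>D. \<Sum>y\<in>E. \<Sum>i\<in>A. \<Sum>j\<in>B. \<Sum>p\<in>C. \<Sum>z\<in>F. h i j p x y z)"
    by (rule sum.cong[OF refl], rule sum_swap_single_triple)
  also have "\<dots> = (\<Sum>x\<in>D. \<Sum>y\<in>E. \<Sum>z\<in>F. \<Sum>i\<in>A. \<Sum>j\<in>B. \<Sum>p\<in>C. h i j p x y z)"
    by (rule sum.cong[OF refl], rule sum.cong[OF refl], rule sum_swap_single_triple)
  finally show ?thesis .
qed

lemma bilin_apply_lin_comp: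
  assumes "lin g"
  shows "g (bilin_apply F X) = bilin_apply (\<lambda>p q. g (F p q)) X"
proof -
  have "g (bilin_apply F X) = (\<lambda>k. \<Sum>i\<in>UNIV. g (\<lambda>k. \<Sum>j\<in>UNIV. X i j * F (bvec i) (bvec j) k) k)"
    unfolding bilin_apply_def by (rule lin_sum[OF assms]) simp
  also have "\<dots> = (\<lambda>k. \<Sum>i\<in>UNIV. \<Sum>j\<in>UNIV. g (\<lambda>k. X i j * F (bvec i) (bvec j) k) k)"
    by (simp add: lin_sum[OF assms])
  also have "\<dots> = bilin_apply (\<lambda>p q. g (F p q)) X"
    by (simp add: lin_scale[OF assms] bilin_apply_def)
  finally show ?thesis .
qed

lemma bilin_apply_swap:
  "bilin_apply (\<lambda>p q. bilin_apply (\<lambda>p' q'. G p q p' q') Y) X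
      = bilin_apply (\<lambda>p' q'. bilin_apply (\<lambda>p q. G p q p' q') X) Y" (is "?L = ?R")
proof (rule ext)
  fix k
  have "bilin_apply (\<lambda>p q. bilin_apply (\<lambda>p' q'. G p q p' q') Y) X k
      = (\<Sum>i\<in>UNIV. \<Sum>j\<in>UNIV. \<Sum>i'\<in>UNIV. \<Sum>j'\<in>UNIV. X i j * Y i' j' * G (bvec i) (bvec j) (bvec i') (bvec j') k)"
    unfolding bilin_apply_def by (simp add: sum_distrib_left mult.assoc)
  also have "\<dots> = (\<Sum>i'\<in>UNIV. \<Sum>j'\<in>UNIV. \<Sum>i\<in>UNIV. \<Sum>j\<in>UNIV. X i j * Y i' j'
      * G (bvec i) (bvec j) (bvec i') (bvec j') k)"
    by (rule sum_swap_pairs)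
  also have "\<dots> = bilin_apply (\<lambda>p' q'. bilin_apply (\<lambda>p q. G p q p' q') X) Y k"
    unfolding bilin_apply_def by (simp add: sum_distrib_left mult.assoc mult.left_commute)
  finally show "?L k = ?R k" .
qed

lemma bilin_apply_tau: "bilin_apply F (tau X) = bilin_apply (\<lambda>p q. F q p) X"
  unfolding bilin_apply_def tau_def by (rule ext, subst sum.swap, simp)

lemma bilin_apply_tens:
  assumes "bilin F"
  shows "bilin_apply F (tens x y) = F x y"
  unfolding bilin_apply_def tens_def bilin_expand[OF assms, of x y] by simp

lemma tensor_eqI:
  fixes X Y :: "'i::finite \<Rightarrow> 'i \<Rightarrow> 'k::field"
  assumes "\<And>F. bilin F \<Longrightarrow> bilin_apply F X = bilin_apply F Y"
  shows "X = Y"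
proof (rule ext, rule ext)
  fix a b
  let ?F = "\<lambda>(p::'i\<Rightarrow>'k) (q::'i\<Rightarrow>'k) (k::'i). p a * q b"
  have "bilin ?F" by (intro bilinI linI) (auto simp: algebra_simps)
  then have "bilin_apply ?F X = bilin_apply ?F Y" by (rule assms)
  then have "bilin_apply ?F X a = bilin_apply ?F Y a" by simp
  moreover have "bilin_apply ?F Z a = Z a b" for Z :: "'i \<Rightarrow> 'i \<Rightarrow> 'k"
  proof -
    have "bilin_apply ?F Z a = (\<Sum>i\<in>UNIV. \<Sum>j\<in>UNIV. Z i j * bvec i a * bvec j b)"
      by (simp add: bilin_apply_def mult.assoc)
    also have "\<dots> = (\<Sum>i\<in>UNIV. Z i b * bvec i a)"
      by (simp add: sum_mult_bvec)
    also have "\<dots> = Z a b" by (simp add: sum_mult_bvec)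
    finally show ?thesis .
  qed
  ultimately show "X a b = Y a b" by simp
qed

lemma lin_bilin_apply:
  assumes "\<And>i j. lin (\<lambda>x. F x (bvec i) (bvec j))"
  shows "lin (\<lambda>x. bilin_apply (F x) X)"
proof (rule linI)
  fix x y
  have a: "F (\<lambda>k. x k + y k) (bvec i) (bvec j)
      = (\<lambda>k. F x (bvec i) (bvec j) k + F y (bvec i) (bvec j) k)" for i j
    using lin_add[OF assms[of i j]] by simp
  show "bilin_apply (F (\<lambda>k. x k + y k)) X = (\<lambda>k. bilin_apply (F x) X k + bilin_apply (F y) X k)"
    by (rule ext) (simp add: bilin_apply_def a sum.distrib algebra_simps)
next
  fix c x
  have a: "F (\<lambda>k. c * x k) (bvec i) (bvec j) = (\<lambda>k. c * F x (bvec i) (bvec j) k)" for i j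
    using lin_scale[OF assms[of i j]] by simp
  show "bilin_apply (F (\<lambda>k. c * x k)) X = (\<lambda>k. c * bilin_apply (F x) X k)"
    by (rule ext) (simp add: bilin_apply_def a sum_distrib_left algebra_simps)
qed

lemma lin_bilin_apply_Delta: "lin f \<Longrightarrow> lin (\<lambda>x. bilin_apply F (vDelta H (f x)))"
  by (rule linI) (auto simp: bilin_apply_def vDelta_def lin_add lin_scale algebra_simps sum.distrib
      sum_distrib_left)

lemma vmul_bvec: "vmul H (bvec i) (bvec j) = (\<lambda>k. mu H i j k)"
  by (rule ext) (simp add: vmul_def mult.assoc sum_distrib_left[symmetric] sum_bvec_mult)

lemma vDelta_bvec: "vDelta H (bvec k) = delta H k"
  by (rule ext, rule ext) (simp add: vDelta_def sum_bvec_mult)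

lemma bilin_apply_tmul:
  assumes "bilin F"
  shows "bilin_apply F (tmul H X Y) = bilin_apply
      (\<lambda>p q. bilin_apply (\<lambda>p' q'. F (vmul H p p') (vmul H q q')) Y) X" (is "?L = ?R")
proof (rule ext)
  fix c
  have "bilin_apply F (tmul H X Y) c = (\<Sum>k\<in>UNIV. \<Sum>l\<in>UNIV. \<Sum>i\<in>UNIV. \<Sum>j\<in>UNIV. \<Sum>i'\<in>UNIV. \<Sum>j'\<in>UNIV.
      X i j * Y i' j' * mu H i i' k * mu H j j' l * F (bvec k) (bvec l) c)"
    by (simp add: bilin_apply_def tmul_def sum_distrib_right)
  also have "\<dots> = (\<Sum>i\<in>UNIV. \<Sum>j\<in>UNIV. \<Sum>k\<in>UNIV. \<Sum>l\<in>UNIV. \<Sum>i'\<in>UNIV. \<Sum>j'\<in>UNIV.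
      X i j * Y i' j' * mu H i i' k * mu H j j' l * F (bvec k) (bvec l) c)"
    by (rule sum_swap_pairs)
  also have "\<dots> = (\<Sum>i\<in>UNIV. \<Sum>j\<in>UNIV. \<Sum>i'\<in>UNIV. \<Sum>j'\<in>UNIV. \<Sum>k\<in>UNIV. \<Sum>l\<in>UNIV.
      X i j * Y i' j' * mu H i i' k * mu H j j' l * F (bvec k) (bvec l) c)"
    by (rule sum.cong[OF refl], rule sum.cong[OF refl], rule sum_swap_pairs)
  also have "\<dots> = bilin_apply (\<lambda>p q. bilin_apply (\<lambda>p' q'. F (vmul H p p') (vmul H q q')) Y) X c"
    by (simp add: bilin_apply_def vmul_bvec bilin_expand[OF assms, of "\<lambda>k. mu H _ _ k" "\<lambda>k. mu H _ _ k"]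
          sum_distrib_left mult.assoc)
  finally show "?L c = ?R c" .
qed

definition tmap :: "(('i::finite \<Rightarrow> 'k::field) \<Rightarrow> ('i \<Rightarrow> 'k)) \<Rightarrow> (('i \<Rightarrow> 'k) \<Rightarrow> ('i \<Rightarrow> 'k)) \<Rightarrow> ('i \<Rightarrow> 'i \<Rightarrow> 'k) \<Rightarrow>
    ('i \<Rightarrow> 'i \<Rightarrow> 'k)" where
  "tmap f g X = (\<lambda>a b. \<Sum>i\<in>UNIV. \<Sum>j\<in>UNIV. X i j * f (bvec i) a * g (bvec j) b)"

lemma bilin_apply_tmap:
  assumes "bilin F" "lin f" "lin g"
  shows "bilin_apply F (tmap f g X) = bilin_apply (\<lambda>p q. F (f p) (g q)) X" (is "?L = ?R")
proof (rule ext)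
  fix c
  have "bilin_apply F (tmap f g X) c = (\<Sum>a\<in>UNIV. \<Sum>b\<in>UNIV. \<Sum>i\<in>UNIV. \<Sum>j\<in>UNIV. X i j * f (bvec i) a
      * g (bvec j) b * F (bvec a) (bvec b) c)"
    by (simp add: bilin_apply_def tmap_def sum_distrib_right)
  also have "\<dots> = (\<Sum>i\<in>UNIV. \<Sum>j\<in>UNIV. \<Sum>a\<in>UNIV. \<Sum>b\<in>UNIV. X i j * f (bvec i) a * g (bvec j) b
      * F (bvec a) (bvec b) c)"
    by (rule sum_swap_pairs)
  also have "\<dots> = bilin_apply (\<lambda>p q. F (f p) (g q)) X c"
    by (simp add: bilin_apply_def bilin_expand[OF assms(1), of "f _" "g _"] sum_distrib_left mult.assoc)
  finally show "?L c = ?R c" .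
qed

lemma tmap_comp:
  fixes f g f' g' :: "('i::finite \<Rightarrow> 'k::field) \<Rightarrow> ('i \<Rightarrow> 'k)"
  assumes "lin f" "lin g" "lin f'" "lin g'"
  shows "tmap f g (tmap f' g' X) = tmap (\<lambda>x. f (f' x)) (\<lambda>x. g (g' x)) X"
proof (rule tensor_eqI)
  fix F :: "('i \<Rightarrow> 'k) \<Rightarrow> ('i \<Rightarrow> 'k) \<Rightarrow> 'i \<Rightarrow> 'k" assume F: "bilin F"
  note FL = bilin_lin_left[OF F] and FR = bilin_lin_right[OF F]
  have b1: "bilin (\<lambda>p q. F (f p) (g q))" by (intro bilinI FL FR assms)
  have l1: "lin (\<lambda>x. f (f' x))" "lin (\<lambda>x. g (g' x))" using assms by (auto intro: lin_comp)
  show "bilin_apply F (tmap f g (tmap f' g' X)) = bilin_apply F (tmap (\<lambda>x. f (f' x)) (\<lambda>x. g (g' x)) X)"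
    by (simp add: bilin_apply_tmap F b1 assms l1)
qed

lemma tmap_id: fixes X :: "'i::finite \<Rightarrow> 'i \<Rightarrow> 'k::field" shows "tmap (\<lambda>x. x) (\<lambda>x. x) X = X"
proof (rule tensor_eqI)
  fix F :: "('i \<Rightarrow> 'k) \<Rightarrow> ('i \<Rightarrow> 'k) \<Rightarrow> 'i \<Rightarrow> 'k" assume F: "bilin F"
  show "bilin_apply F (tmap (\<lambda>x. x) (\<lambda>x. x) X) = bilin_apply F X" by (simp add: bilin_apply_tmap F lin_id)
qed

definition trilin_apply :: "(('i::finite \<Rightarrow> 'k::field) \<Rightarrow> ('i \<Rightarrow> 'k) \<Rightarrow> ('i \<Rightarrow> 'k) \<Rightarrow> ('i \<Rightarrow> 'k)) \<Rightarrow>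
    ('i \<Rightarrow> 'i \<Rightarrow> 'i \<Rightarrow> 'k) \<Rightarrow> ('i \<Rightarrow> 'k)" where
  "trilin_apply F T = (\<lambda>c. \<Sum>a\<in>UNIV. \<Sum>b\<in>UNIV. \<Sum>d\<in>UNIV. T a b d * F (bvec a) (bvec b) (bvec d) c)"

lemma lin_trilin_apply:
  assumes "\<And>i j l. lin (\<lambda>x. F x (bvec i) (bvec j) (bvec l))"
  shows "lin (\<lambda>x. trilin_apply (F x) T)"
proof (rule linI)
  fix x y
  have a: "F (\<lambda>k. x k + y k) (bvec i) (bvec j) (bvec l)
      = (\<lambda>k. F x (bvec i) (bvec j) (bvec l) k + F y (bvec i) (bvec j) (bvec l) k)" for i j l
    using lin_add[OF assms[of i j l]] by simp
  show "trilin_apply (F (\<lambda>k. x k + y k)) T = (\<lambda>k. trilin_apply (F x) T k + trilin_apply (F y) T k)"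
    by (rule ext) (simp add: trilin_apply_def a sum.distrib algebra_simps)
next
  fix c x
  have a: "F (\<lambda>k. c * x k) (bvec i) (bvec j) (bvec l) = (\<lambda>k. c * F x (bvec i) (bvec j) (bvec l) k)" for i j l
    using lin_scale[OF assms[of i j l]] by simp
  show "trilin_apply (F (\<lambda>k. c * x k)) T = (\<lambda>k. c * trilin_apply (F x) T k)"
    by (rule ext) (simp add: trilin_apply_def a sum_distrib_left algebra_simps)
qed

lemma trilin_apply_Delta_id: "trilin_apply F (Delta_id H X)
    = bilin_apply (\<lambda>p q. bilin_apply (\<lambda>p1 p2. F p1 p2 q) (vDelta H p)) X" (is "?L = ?R")
proof (rule ext)
  fix c
  have "trilin_apply F (Delta_id H X) c = (\<Sum>a\<in>UNIV. \<Sum>b\<in>UNIV. \<Sum>d\<in>UNIV. \<Sum>k\<in>UNIV. X k d * delta H k a b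
      * F (bvec a) (bvec b) (bvec d) c)"
    by (simp add: trilin_apply_def Delta_id_def sum_distrib_right)
  also have "\<dots> = (\<Sum>a\<in>UNIV. \<Sum>b\<in>UNIV. \<Sum>k\<in>UNIV. \<Sum>d\<in>UNIV. X k d * delta H k a b * F (bvec a) (bvec b) (bvec d) c)"
    by (rule sum.cong[OF refl], rule sum.cong[OF refl], rule sum.swap)
  also have "\<dots> = (\<Sum>k\<in>UNIV. \<Sum>d\<in>UNIV. \<Sum>a\<in>UNIV. \<Sum>b\<in>UNIV. X k d * delta H k a b * F (bvec a) (bvec b) (bvec d) c)"
    by (rule sum_swap_pairs)
  also have "\<dots> = bilin_apply (\<lambda>p q. bilin_apply (\<lambda>p1 p2. F p1 p2 q) (vDelta H p)) X c"
    by (simp add: bilin_apply_def vDelta_bvec sum_distrib_left mult.assoc)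
  finally show "?L c = ?R c" .
qed

lemma trilin_apply_id_Delta: "trilin_apply F (id_Delta H X)
    = bilin_apply (\<lambda>p q. bilin_apply (\<lambda>q1 q2. F p q1 q2) (vDelta H q)) X" (is "?L = ?R")
proof (rule ext)
  fix c
  have "trilin_apply F (id_Delta H X) c = (\<Sum>a\<in>UNIV. \<Sum>b\<in>UNIV. \<Sum>d\<in>UNIV. \<Sum>k\<in>UNIV. X a k * delta H k b d
      * F (bvec a) (bvec b) (bvec d) c)"
    by (simp add: trilin_apply_def id_Delta_def sum_distrib_right)
  also have "\<dots> = (\<Sum>a\<in>UNIV. \<Sum>k\<in>UNIV. \<Sum>b\<in>UNIV. \<Sum>d\<in>UNIV. X a k * delta H k b d * F (bvec a) (bvec b) (bvec d) c)"
    by (rule sum.cong[OF refl], subst sum.swap, rule sum.cong[OF refl], rule sum.swap)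
  also have "\<dots> = bilin_apply (\<lambda>p q. bilin_apply (\<lambda>q1 q2. F p q1 q2) (vDelta H q)) X c"
    by (simp add: bilin_apply_def vDelta_bvec sum_distrib_left mult.assoc)
  finally show "?L c = ?R c" .
qed

lemma trilin_apply_t3mul:
  assumes "trilin F"
  shows "trilin_apply F (t3mul H X Y) = trilin_apply
      (\<lambda>a b c. trilin_apply (\<lambda>a' b' c'. F (vmul H a a') (vmul H b b') (vmul H c c')) Y) X" (is "?L = ?R")
proof (rule ext)
  fix c0
  have "trilin_apply F (t3mul H X Y) c0 = (\<Sum>k\<in>UNIV. \<Sum>l\<in>UNIV. \<Sum>m\<in>UNIV. \<Sum>i\<in>UNIV. \<Sum>j\<in>UNIV. \<Sum>p\<in>UNIV.
      \<Sum>i'\<in>UNIV. \<Sum>j'\<in>UNIV. \<Sum>p'\<in>UNIV.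
      X i j p * Y i' j' p' * mu H i i' k * mu H j j' l * mu H p p' m * F (bvec k) (bvec l) (bvec m) c0)"
    by (simp add: trilin_apply_def t3mul_def sum_distrib_right)
  also have "\<dots> = (\<Sum>i\<in>UNIV. \<Sum>j\<in>UNIV. \<Sum>p\<in>UNIV. \<Sum>k\<in>UNIV. \<Sum>l\<in>UNIV. \<Sum>m\<in>UNIV.
      \<Sum>i'\<in>UNIV. \<Sum>j'\<in>UNIV. \<Sum>p'\<in>UNIV.
      X i j p * Y i' j' p' * mu H i i' k * mu H j j' l * mu H p p' m * F (bvec k) (bvec l) (bvec m) c0)"
    by (rule sum_swap_triples)
  also have "\<dots> = (\<Sum>i\<in>UNIV. \<Sum>j\<in>UNIV. \<Sum>p\<in>UNIV. \<Sum>i'\<in>UNIV. \<Sum>j'\<in>UNIV. \<Sum>p'\<in>UNIV.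
      \<Sum>k\<in>UNIV. \<Sum>l\<in>UNIV. \<Sum>m\<in>UNIV.
      X i j p * Y i' j' p' * mu H i i' k * mu H j j' l * mu H p p' m * F (bvec k) (bvec l) (bvec m) c0)"
    by (rule sum.cong[OF refl], rule sum.cong[OF refl], rule sum.cong[OF refl], rule sum_swap_triples)
  also have "\<dots> = trilin_apply (\<lambda>a b c. trilin_apply
      (\<lambda>a' b' c'. F (vmul H a a') (vmul H b b') (vmul H c c')) Y) X c0"
    by (simp add: trilin_apply_def vmul_bvec trilin_expand[OF assms, of "\<lambda>k. mu H _ _ k" "\<lambda>k. mu H _ _ k"
        "\<lambda>k. mu H _ _ k"]
          sum_distrib_left mult.assoc)
  finally show "?L c0 = ?R c0" .
qed

lemma trilin_apply_R13:
  assumes "\<And>x z. lin (\<lambda>y. F x y z)"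
  shows "trilin_apply F (R13 H R) = bilin_apply (\<lambda>p q. F p (vone H) q) R" (is "?L = ?R")
proof (rule ext)
  fix c
  have e: "F (bvec a) (vone H) (bvec d) = (\<lambda>c. \<Sum>b\<in>UNIV. vone H b * F (bvec a) (bvec b) (bvec d) c)" for a d
    using lin_expand[OF assms[of "bvec a" "bvec d"], of "vone H"] by simp
  have "trilin_apply F (R13 H R) c = (\<Sum>a\<in>UNIV. \<Sum>b\<in>UNIV. \<Sum>d\<in>UNIV. R a d
      * (vone H b * F (bvec a) (bvec b) (bvec d) c))"
    by (simp add: trilin_apply_def R13_def mult.assoc)
  also have "\<dots> = (\<Sum>a\<in>UNIV. \<Sum>d\<in>UNIV. \<Sum>b\<in>UNIV. R a d * (vone H b * F (bvec a) (bvec b) (bvec d) c))"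
    by (rule sum.cong[OF refl], rule sum.swap)
  also have "\<dots> = bilin_apply (\<lambda>p q. F p (vone H) q) R c"
    by (simp add: bilin_apply_def e sum_distrib_left)
  finally show "?L c = ?R c" .
qed

lemma trilin_apply_R23:
  assumes "\<And>y z. lin (\<lambda>x. F x y z)"
  shows "trilin_apply F (R23 H R) = bilin_apply (\<lambda>p q. F (vone H) p q) R" (is "?L = ?R")
proof (rule ext)
  fix c
  have e: "F (vone H) (bvec b) (bvec d) = (\<lambda>c. \<Sum>a\<in>UNIV. vone H a * F (bvec a) (bvec b) (bvec d) c)" for b d
    using lin_expand[OF assms[of "bvec b" "bvec d"], of "vone H"] by simp
  have "trilin_apply F (R23 H R) c = (\<Sum>a\<in>UNIV. \<Sum>b\<in>UNIV. \<Sum>d\<in>UNIV. R b d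
      * (vone H a * F (bvec a) (bvec b) (bvec d) c))"
    by (simp add: trilin_apply_def R23_def algebra_simps)
  also have "\<dots> = (\<Sum>b\<in>UNIV. \<Sum>a\<in>UNIV. \<Sum>d\<in>UNIV. R b d * (vone H a * F (bvec a) (bvec b) (bvec d) c))"
    by (rule sum.swap)
  also have "\<dots> = (\<Sum>b\<in>UNIV. \<Sum>d\<in>UNIV. \<Sum>a\<in>UNIV. R b d * (vone H a * F (bvec a) (bvec b) (bvec d) c))"
    by (rule sum.cong[OF refl], rule sum.swap)
  also have "\<dots> = bilin_apply (\<lambda>p q. F (vone H) p q) R c"
    by (simp add: bilin_apply_def e sum_distrib_left)
  finally show "?L c = ?R c" .
qed

lemma trilin_apply_R12:
  assumes "\<And>x y. lin (\<lambda>z. F x y z)"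
  shows "trilin_apply F (R12 H R) = bilin_apply (\<lambda>p q. F p q (vone H)) R"
proof (rule ext)
  fix c
  have e: "F (bvec a) (bvec b) (vone H) = (\<lambda>c. \<Sum>d\<in>UNIV. vone H d * F (bvec a) (bvec b) (bvec d) c)" for a b
    using lin_expand[OF assms[of "bvec a" "bvec b"], of "vone H"] by simp
  show "trilin_apply F (R12 H R) c = bilin_apply (\<lambda>p q. F p q (vone H)) R c"
    by (simp add: trilin_apply_def R12_def bilin_apply_def e sum_distrib_left mult.assoc)
qed

lemmas lin_intros = lin_id lin_vmul1 lin_vmul2 lin_vS lin_veps_mult lin_scaleI lin_bilin_apply_Delta
    lin_bilin_apply lin_trilin_apply

locale hopf_algebra =
  fixes H :: "('k::field, 'i::finite) hopf"
  assumes hopf: "is_hopf H"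
begin

abbreviation m where "m \<equiv> vmul H"
abbreviation one where "one \<equiv> vone H"
abbreviation S where "S \<equiv> vS H"
abbreviation D where "D \<equiv> vDelta H"
abbreviation eps where "eps \<equiv> veps H"

lemma mult_assoc: "m (m x y) z = m x (m y z)"
  using hopf unfolding is_hopf_def by blast
lemma mult_one_left[simp]: "m one x = x"
  using hopf unfolding is_hopf_def by blast
lemma mult_one_right[simp]: "m x one = x"
  using hopf unfolding is_hopf_def by blast
lemma coassoc: "Delta_id H (D x) = id_Delta H (D x)"
  using hopf unfolding is_hopf_def by blast
lemma Delta_mult: "D (m x y) = tmul H (D x) (D y)"
  using hopf unfolding is_hopf_def by blast
lemma Delta_one: "D one = tone H"
  using hopf unfolding is_hopf_def by blast
lemma eps_mult: "eps (m x y) = eps x * eps y"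
  using hopf unfolding is_hopf_def by blast
lemma eps_one[simp]: "eps one = 1"
  using hopf unfolding is_hopf_def by blast
lemma antipode_left: "bilin_apply (\<lambda>p q. m (S p) q) (D x) = (\<lambda>k. eps x * one k)"
  using hopf unfolding is_hopf_def by blast
lemma antipode_right: "bilin_apply (\<lambda>p q. m p (S q)) (D x) = (\<lambda>k. eps x * one k)"
  using hopf unfolding is_hopf_def by blast

lemma lin_antipode: "lin S" using lin_vS[OF lin_id, where H=H] by simp

lemma eps_bvec: "eps (bvec i) = counit H i"
  by (simp add: veps_def sum_bvec_mult)

lemma counit_left: "bilin_apply (\<lambda>p q k. eps p * q k) (D x) = x"
proof -
  have "(\<lambda>j. \<Sum>i\<in>UNIV. counit H i * D x i j) = x"
    using hopf unfolding is_hopf_def by blast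
  moreover have "bilin_apply (\<lambda>p q k. eps p * q k) (D x) = (\<lambda>j. \<Sum>i\<in>UNIV. counit H i * D x i j)"
    by (rule ext) (simp add: bilin_apply_def eps_bvec mult.left_commute sum_distrib_left[symmetric]
        sum_mult_bvec)
  ultimately show ?thesis by simp
qed

lemma counit_right: "bilin_apply (\<lambda>p q k. eps q * p k) (D x) = x"
proof -
  have "(\<lambda>i. \<Sum>j\<in>UNIV. D x i j * counit H j) = x"
    using hopf unfolding is_hopf_def by blast
  moreover have "bilin_apply (\<lambda>p q k. eps q * p k) (D x) = (\<lambda>i. \<Sum>j\<in>UNIV. D x i j * counit H j)"
    by (rule ext) (simp add: bilin_apply_def eps_bvec mult.assoc[symmetric] sum_distrib_right[symmetric]
        sum_mult_bvec)
  ultimately show ?thesis by simp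
qed

lemma counit_left_lin:
  assumes "lin G"
  shows "bilin_apply (\<lambda>p q k. eps p * G q k) (D x) = G x"
proof -
  have "G x = G (bilin_apply (\<lambda>p q k. eps p * q k) (D x))" by (simp only: counit_left)
  also have "\<dots> = bilin_apply (\<lambda>p q. G (\<lambda>k. eps p * q k)) (D x)" by (rule bilin_apply_lin_comp[OF assms])
  also have "\<dots> = bilin_apply (\<lambda>p q k. eps p * G q k) (D x)" by (simp only: lin_scale[OF assms])
  finally show ?thesis by simp
qed

lemma counit_right_lin:
  assumes "lin G"
  shows "bilin_apply (\<lambda>p q k. eps q * G p k) (D x) = G x"
proof -
  have "G x = G (bilin_apply (\<lambda>p q k. eps q * p k) (D x))" by (simp only: counit_right)
  also have "\<dots> = bilin_apply (\<lambda>p q. G (\<lambda>k. eps q * p k)) (D x)" by (rule bilin_apply_lin_comp[OF assms])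
  also have "\<dots> = bilin_apply (\<lambda>p q k. eps q * G p k) (D x)" by (simp only: lin_scale[OF assms])
  finally show ?thesis by simp
qed

lemma antipode_left_lin:
  assumes "lin G"
  shows "bilin_apply (\<lambda>p q. G (m (S p) q)) (D x) = (\<lambda>k. eps x * G one k)"
proof -
  have "bilin_apply (\<lambda>p q. G (m (S p) q)) (D x) = G (bilin_apply (\<lambda>p q. m (S p) q) (D x))"
    by (rule bilin_apply_lin_comp[OF assms, symmetric])
  also have "\<dots> = G (\<lambda>k. eps x * one k)" by (simp only: antipode_left)
  also have "\<dots> = (\<lambda>k. eps x * G one k)" by (rule lin_scale[OF assms])
  finally show ?thesis .
qed

lemma antipode_right_lin:
  assumes "lin G"
  shows "bilin_apply (\<lambda>p q. G (m p (S q))) (D x) = (\<lambda>k. eps x * G one k)"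
proof -
  have "bilin_apply (\<lambda>p q. G (m p (S q))) (D x) = G (bilin_apply (\<lambda>p q. m p (S q)) (D x))"
    by (rule bilin_apply_lin_comp[OF assms, symmetric])
  also have "\<dots> = G (\<lambda>k. eps x * one k)" by (simp only: antipode_right)
  also have "\<dots> = (\<lambda>k. eps x * G one k)" by (rule lin_scale[OF assms])
  finally show ?thesis .
qed

lemma bilin_apply_Delta_mult:
  assumes "bilin F"
  shows "bilin_apply (\<lambda>p q. bilin_apply (\<lambda>p' q'. F (m p p') (m q q')) (D y)) (D x)
    = bilin_apply F (D (m x y))"
proof -
  have "bilin_apply F (D (m x y)) = bilin_apply F (tmul H (D x) (D y))" by (simp only: Delta_mult)
  also have "\<dots> = bilin_apply (\<lambda>p q. bilin_apply (\<lambda>p' q'. F (m p p') (m q q')) (D y)) (D x)"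
    by (rule bilin_apply_tmul[OF assms])
  finally show ?thesis by (rule sym)
qed

lemma antipode_one: "S one = one"
proof -
  have "bilin_apply (\<lambda>p q. m (S p) q) (D one) = bilin_apply (\<lambda>p q. m (S p) q) (tens one one)"
    unfolding Delta_one tone_def ..
  also have "\<dots> = m (S one) one"
    by (rule bilin_apply_tens) (intro bilinI lin_intros)
  finally have "m (S one) one = (\<lambda>k. eps one * one k)" unfolding antipode_left by (rule sym)
  then show ?thesis by simp
qed

text \<open>\<open>S(y\<^sub>1) S(x\<^sub>1) x\<^sub>2 y\<^sub>2 S(x\<^sub>3 y\<^sub>3)\<close>: the antipode axiom collapses it from the left
  to \<open>S(xy)\<close> and, through \<open>\<Delta>(x\<^sub>2 y\<^sub>2)\<close>, from the right to \<open>S(y) S(x)\<close>.\<close>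

definition antipode_mult_convolution :: "('i \<Rightarrow> 'k) \<Rightarrow> ('i \<Rightarrow> 'k) \<Rightarrow> 'i \<Rightarrow> 'k" where
  "antipode_mult_convolution x y = trilin_apply (\<lambda>x1 x2 x3. trilin_apply (\<lambda>y1 y2 y3.
     m (S y1) (m (S x1) (m x2 (m y2 (S (m x3 y3)))))) (Delta_id H (D y))) (Delta_id H (D x))"

lemma antipode_mult_convolution_left: "antipode_mult_convolution x y = S (m x y)"
proof -
  define L where "L = (\<lambda>x3 z. trilin_apply (\<lambda>y1 y2 y3. m (S y1) (m z (m y2 (S (m x3 y3)))))
      (Delta_id H (D y)))"
  have linL: "lin (L x3)" for x3 unfolding L_def by (intro lin_intros)
  have "antipode_mult_convolution x y = bilin_apply
      (\<lambda>p x3. bilin_apply (\<lambda>x1 x2. L x3 (m (S x1) x2)) (D p)) (D x)"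
    unfolding antipode_mult_convolution_def trilin_apply_Delta_id L_def by (simp add: mult_assoc)
  also have "\<dots> = bilin_apply (\<lambda>p x3 k. eps p * L x3 one k) (D x)"
    by (simp add: antipode_left_lin[OF linL])
  also have "\<dots> = L x one"
    by (rule counit_left_lin[of "\<lambda>x3. L x3 one"]) (unfold L_def, intro lin_intros)
  also have "\<dots> = bilin_apply (\<lambda>p y3. bilin_apply (\<lambda>y1 y2. m (m (S y1) y2) (S (m x y3))) (D p)) (D y)"
    unfolding L_def trilin_apply_Delta_id by (simp add: mult_assoc)
  also have "\<dots> = bilin_apply (\<lambda>p y3 k. eps p * S (m x y3) k) (D y)"
    by (subst antipode_left_lin[of "\<lambda>z. m z _"]) (intro lin_intros, simp)
  also have "\<dots> = S (m x y)"
    by (rule counit_left_lin[of "\<lambda>y3. S (m x y3)"]) (intro lin_intros)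
  finally show ?thesis .
qed

lemma antipode_mult_convolution_right: "antipode_mult_convolution x y = m (S y) (S x)"
proof -
  have collapse: "bilin_apply (\<lambda>x2 x3. bilin_apply (\<lambda>y2 y3.
      m (S y1) (m (S x1) (m x2 (m y2 (S (m x3 y3)))))) (D r)) (D q) =
      (\<lambda>k. eps r * (eps q * m (S y1) (S x1) k))" for x1 y1 q r
  proof -
    have "bilin_apply (\<lambda>x2 x3. bilin_apply (\<lambda>y2 y3.
        m (S y1) (m (S x1) (m x2 (m y2 (S (m x3 y3)))))) (D r)) (D q) =
        bilin_apply (\<lambda>a b. m (S y1) (m (S x1) (m a (S b)))) (D (m q r))"
      by (subst bilin_apply_Delta_mult[symmetric]) (intro bilinI lin_intros, simp add: mult_assoc)
    also have "\<dots> = (\<lambda>k. eps r * (eps q * m (S y1) (S x1) k))"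
      by (subst antipode_right_lin[of "\<lambda>z. m (S y1) (m (S x1) z)"])
        (intro lin_intros, simp add: eps_mult mult.assoc mult.left_commute)
    finally show ?thesis .
  qed
  have "antipode_mult_convolution x y = bilin_apply (\<lambda>x1 q. bilin_apply (\<lambda>y1 r.
      bilin_apply (\<lambda>x2 x3. bilin_apply (\<lambda>y2 y3.
        m (S y1) (m (S x1) (m x2 (m y2 (S (m x3 y3)))))) (D r)) (D q)) (D y)) (D x)"
    unfolding antipode_mult_convolution_def coassoc trilin_apply_id_Delta
    by (subst bilin_apply_swap) (rule refl)
  also have "\<dots> = bilin_apply (\<lambda>x1 q. bilin_apply (\<lambda>y1 r k. eps r * (eps q * m (S y1) (S x1) k)) (D y)) (D x)"
    by (simp only: collapse)
  also have "\<dots> = bilin_apply (\<lambda>x1 q k. eps q * m (S y) (S x1) k) (D x)"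
    by (subst counit_right_lin[of "\<lambda>y1 k. eps _ * m (S y1) (S _) k"]) (intro lin_intros, rule refl)
  also have "\<dots> = m (S y) (S x)"
    by (rule counit_right_lin[of "\<lambda>x1. m (S y) (S x1)"]) (intro lin_intros)
  finally show ?thesis .
qed

lemma antipode_mult: "S (m x y) = m (S y) (S x)"
  using antipode_mult_convolution_left antipode_mult_convolution_right by simp

lemma bilin_apply_tone: "bilin F \<Longrightarrow> bilin_apply F (tone H) = F one one"
  unfolding tone_def by (rule bilin_apply_tens)

lemma tmul_assoc: "tmul H (tmul H X Y) Z = tmul H X (tmul H Y Z)" (is "?L = ?R")
proof (rule tensor_eqI)
  fix F :: "('i \<Rightarrow> 'k) \<Rightarrow> ('i \<Rightarrow> 'k) \<Rightarrow> 'i \<Rightarrow> 'k" assume F: "bilin F"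
  note FL = bilin_lin_left[OF F] and FR = bilin_lin_right[OF F]
  have "bilin_apply F (tmul H (tmul H X Y) Z)
      = bilin_apply (\<lambda>p q. bilin_apply (\<lambda>p' q'. F (m p p') (m q q')) Z) (tmul H X Y)"
    by (rule bilin_apply_tmul[OF F])
  also have "\<dots> = bilin_apply (\<lambda>p q. bilin_apply
      (\<lambda>p' q'. bilin_apply (\<lambda>p'' q''. F (m (m p p') p'') (m (m q q') q'')) Z) Y) X"
    by (rule bilin_apply_tmul) (intro bilinI lin_intros FL FR)
  also have "\<dots> = bilin_apply (\<lambda>p q. bilin_apply (\<lambda>p' q'. F (m p p') (m q q')) (tmul H Y Z)) X"
    by (simp add: bilin_apply_tmul[of "\<lambda>p' q'. F (m _ p') (m _ q')"] bilinI lin_intros FL FR mult_assoc)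
  also have "\<dots> = bilin_apply F (tmul H X (tmul H Y Z))"
    by (rule bilin_apply_tmul[OF F, symmetric])
  finally show "bilin_apply F ?L = bilin_apply F ?R" .
qed

lemma tmul_tone_right: "tmul H X (tone H) = X" (is "?L = ?R")
proof (rule tensor_eqI)
  fix F :: "('i \<Rightarrow> 'k) \<Rightarrow> ('i \<Rightarrow> 'k) \<Rightarrow> 'i \<Rightarrow> 'k" assume F: "bilin F"
  note FL = bilin_lin_left[OF F] and FR = bilin_lin_right[OF F]
  have "bilin_apply F (tmul H X (tone H)) = bilin_apply
      (\<lambda>p q. bilin_apply (\<lambda>p' q'. F (m p p') (m q q')) (tone H)) X"
    by (rule bilin_apply_tmul[OF F])
  also have "\<dots> = bilin_apply F X"
    by (simp add: bilin_apply_tone bilinI lin_intros FL FR)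
  finally show "bilin_apply F ?L = bilin_apply F ?R" .
qed

lemma tmul_tone_left: "tmul H (tone H) X = X" (is "?L = ?R")
proof (rule tensor_eqI)
  fix F :: "('i \<Rightarrow> 'k) \<Rightarrow> ('i \<Rightarrow> 'k) \<Rightarrow> 'i \<Rightarrow> 'k" assume F: "bilin F"
  note FL = bilin_lin_left[OF F] and FR = bilin_lin_right[OF F]
  have "bilin_apply F (tmul H (tone H) X) = bilin_apply
      (\<lambda>p q. bilin_apply (\<lambda>p' q'. F (m p p') (m q q')) X) (tone H)"
    by (rule bilin_apply_tmul[OF F])
  also have "\<dots> = bilin_apply F X"
    by (subst bilin_apply_tone) (intro bilinI lin_intros FL FR, simp)
  finally show "bilin_apply F ?L = bilin_apply F ?R" .
qed

end

locale quasitriangular_hopf = hopf_algebra H for H :: "('k::field, 'i::finite) hopf" +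
  fixes R :: "'i \<Rightarrow> 'i \<Rightarrow> 'k"
  assumes qt: "quasitriangular H R"
  assumes Sbij: "bij (vS H)"
begin

definition Rinv where "Rinv = (SOME X. tmul H R X = tone H \<and> tmul H X R = tone H \<and>
        (\<forall>a. tau (D a) = tmul H (tmul H R (D a)) X))"

lemma
  shows R_Rinv: "tmul H R Rinv = tone H"
    and Rinv_R: "tmul H Rinv R = tone H"
    and tau_Delta_conj_R: "tau (D a) = tmul H (tmul H R (D a)) Rinv"
proof -
  have "\<exists>X. tmul H R X = tone H \<and> tmul H X R = tone H \<and>
        (\<forall>a. tau (D a) = tmul H (tmul H R (D a)) X)"
    using qt unfolding quasitriangular_def by blast
  then have "tmul H R Rinv = tone H \<and> tmul H Rinv R = tone H \<and> (\<forall>a. tau (D a) = tmul H (tmul H R (D a)) Rinv)"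
    unfolding Rinv_def by (rule someI_ex)
  then show "tmul H R Rinv = tone H" "tmul H Rinv R = tone H" "tau (D a) = tmul H (tmul H R (D a)) Rinv"
    by auto
qed

lemma Delta_id_R: "Delta_id H R = t3mul H (R13 H R) (R23 H R)"
  using qt unfolding quasitriangular_def by blast
lemma id_Delta_R: "id_Delta H R = t3mul H (R13 H R) (R12 H R)"
  using qt unfolding quasitriangular_def by blast

lemma tmul_tau_Delta_R: "tmul H (tau (D a)) R = tmul H R (D a)"
  by (simp add: tau_Delta_conj_R tmul_assoc Rinv_R tmul_tone_right)

lemma left_inverse_R_eq_Rinv: "tmul H X R = tone H \<Longrightarrow> X = Rinv"
  by (metis R_Rinv tmul_assoc tmul_tone_left tmul_tone_right)

lemma right_inverse_R_eq_Rinv: "tmul H R X = tone H \<Longrightarrow> X = Rinv"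
  by (metis Rinv_R tmul_assoc tmul_tone_left tmul_tone_right)

lemma bilin_apply_Delta_id_R:
  assumes G: "trilin G"
  shows "bilin_apply (\<lambda>p q. bilin_apply (\<lambda>x y. G x y q) (D p)) R
      = bilin_apply (\<lambda>p q. bilin_apply (\<lambda>p' q'. G p p' (m q q')) R) R"
proof -
  have l1: "lin (\<lambda>z. G x y z)" and l2: "lin (\<lambda>y. G x y z)" and l3: "lin (\<lambda>x. G x y z)" for x y z
    using G unfolding trilin_def by auto
  have "bilin_apply (\<lambda>p q. bilin_apply (\<lambda>x y. G x y q) (D p)) R = trilin_apply G (Delta_id H R)"
    by (rule trilin_apply_Delta_id[symmetric])
  also have "\<dots> = trilin_apply G (t3mul H (R13 H R) (R23 H R))" by (simp only: Delta_id_R)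
  also have "\<dots> = trilin_apply (\<lambda>a b c. trilin_apply (\<lambda>a' b' c'. G (m a a') (m b b') (m c c')) (R23 H R))
      (R13 H R)"
    by (rule trilin_apply_t3mul[OF G])
  also have "\<dots> = bilin_apply (\<lambda>p q. trilin_apply (\<lambda>a' b' c'. G (m p a') (m one b') (m q c')) (R23 H R)) R"
    by (rule trilin_apply_R13) (intro lin_intros l1 l2 l3 lin_comp[OF l1] lin_comp[OF l2] lin_comp[OF l3])
  also have "\<dots> = bilin_apply (\<lambda>p q. bilin_apply (\<lambda>p' q'. G p p' (m q q')) R) R"
    by (subst trilin_apply_R23) (intro lin_intros lin_comp[OF l3], simp)
  finally show ?thesis .
qed

lemma bilin_apply_id_Delta_R:
  assumes G: "trilin G"
  shows "bilin_apply (\<lambda>p q. bilin_apply (\<lambda>x y. G p x y) (D q)) R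
      = bilin_apply (\<lambda>p q. bilin_apply (\<lambda>p' q'. G (m p p') q' q) R) R"
proof -
  have l1: "lin (\<lambda>z. G x y z)" and l2: "lin (\<lambda>y. G x y z)" and l3: "lin (\<lambda>x. G x y z)" for x y z
    using G unfolding trilin_def by auto
  have "bilin_apply (\<lambda>p q. bilin_apply (\<lambda>x y. G p x y) (D q)) R = trilin_apply G (id_Delta H R)"
    by (rule trilin_apply_id_Delta[symmetric])
  also have "\<dots> = trilin_apply G (t3mul H (R13 H R) (R12 H R))" by (simp only: id_Delta_R)
  also have "\<dots> = trilin_apply (\<lambda>a b c. trilin_apply (\<lambda>a' b' c'. G (m a a') (m b b') (m c c')) (R12 H R))
      (R13 H R)"
    by (rule trilin_apply_t3mul[OF G])
  also have "\<dots> = bilin_apply (\<lambda>p q. trilin_apply (\<lambda>a' b' c'. G (m p a') (m one b') (m q c')) (R12 H R)) R"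
    by (rule trilin_apply_R13) (intro lin_intros l1 l2 l3 lin_comp[OF l1] lin_comp[OF l2] lin_comp[OF l3])
  also have "\<dots> = bilin_apply (\<lambda>p q. bilin_apply (\<lambda>p' q'. G (m p p') q' q) R) R"
    by (subst trilin_apply_R12) (intro lin_intros lin_comp[OF l1], simp)
  finally show ?thesis .
qed

lemma bilin_apply_R_Rinv:
  assumes "bilin G"
  shows "bilin_apply (\<lambda>c d. bilin_apply (\<lambda>x y. G (m c x) (m d y)) Rinv) R = G one one"
  using bilin_apply_tmul[OF assms, of H R Rinv] bilin_apply_tone[OF assms] R_Rinv by simp

text \<open>Applying \<open>\<epsilon>\<close> to the first leg of \<open>(\<Delta> \<otimes> id) R = R\<^sub>1\<^sub>3 R\<^sub>2\<^sub>3\<close> gives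
  \<open>R = (1 \<otimes> z) R\<close> with \<open>z = (\<epsilon> \<otimes> id) R\<close>; invertibility of \<open>R\<close> then forces \<open>z = 1\<close>.\<close>

lemma bilin_apply_R_counit_left_R:
  assumes F: "bilin F"
  shows "bilin_apply F R = bilin_apply (\<lambda>p q. F p (m (bilin_apply (\<lambda>p q k. eps p * q k) R) q)) R"
proof -
  note FL = bilin_lin_left[OF F] and FR = bilin_lin_right[OF F]
  have "bilin_apply F R = bilin_apply (\<lambda>p q. bilin_apply (\<lambda>x y k. eps x * F y q k) (D p)) R"
    by (subst counit_left_lin) (intro lin_intros FL, rule refl)
  also have "\<dots> = bilin_apply (\<lambda>p q. bilin_apply (\<lambda>p' q' k. eps p * F p' (m q q') k) R) R"
    by (rule bilin_apply_Delta_id_R) (intro trilinI lin_intros FL FR)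
  also have "\<dots> = bilin_apply (\<lambda>p' q'. bilin_apply (\<lambda>p q k. eps p * F p' (m q q') k) R) R"
    by (rule bilin_apply_swap)
  also have "\<dots> = bilin_apply (\<lambda>p q. F p (m (bilin_apply (\<lambda>p q k. eps p * q k) R) q)) R"
  proof -
    have "bilin_apply (\<lambda>p q k. eps p * F p' (m q q') k) R = F p' (m (bilin_apply (\<lambda>p q k. eps p * q k) R) q')"
      for p' q'
    proof -
      have lg: "lin (\<lambda>w. F p' (m w q'))" by (intro lin_intros FR)
      show ?thesis by (subst bilin_apply_lin_comp[OF lg]) (simp add: lin_scale[OF lg])
    qed
    then show ?thesis by simp
  qed
  finally show ?thesis .
qed

lemma bilin_apply_R_counit_right_R:
  assumes F: "bilin F"
  shows "bilin_apply F R = bilin_apply (\<lambda>p q. F (m (bilin_apply (\<lambda>p q k. eps q * p k) R) p) q) R"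
proof -
  note FL = bilin_lin_left[OF F] and FR = bilin_lin_right[OF F]
  have "bilin_apply F R = bilin_apply (\<lambda>p q. bilin_apply (\<lambda>x y k. eps y * F p x k) (D q)) R"
    by (subst counit_right_lin) (intro lin_intros FR, rule refl)
  also have "\<dots> = bilin_apply (\<lambda>p q. bilin_apply (\<lambda>p' q' k. eps q * F (m p p') q' k) R) R"
    by (rule bilin_apply_id_Delta_R) (intro trilinI lin_intros FL FR)
  also have "\<dots> = bilin_apply (\<lambda>p' q'. bilin_apply (\<lambda>p q k. eps q * F (m p p') q' k) R) R"
    by (rule bilin_apply_swap)
  also have "\<dots> = bilin_apply (\<lambda>p q. F (m (bilin_apply (\<lambda>p q k. eps q * p k) R) p) q) R"
  proof -
    have "bilin_apply (\<lambda>p q k. eps q * F (m p p') q' k) R = F (m (bilin_apply (\<lambda>p q k. eps q * p k) R) p') q'"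
      for p' q'
    proof -
      have lg: "lin (\<lambda>w. F (m w p') q')" by (intro lin_intros FL)
      show ?thesis by (subst bilin_apply_lin_comp[OF lg]) (simp add: lin_scale[OF lg])
    qed
    then show ?thesis by simp
  qed
  finally show ?thesis .
qed

lemma counit_left_R: "bilin_apply (\<lambda>p q k. eps p * q k) R = one"
proof -
  define z where "z = bilin_apply (\<lambda>p q k. eps p * q k) R"
  define F where "F = (\<lambda>(a::'i\<Rightarrow>'k) (b::'i\<Rightarrow>'k) k. eps a * b k)"
  have F: "bilin F" unfolding F_def by (intro bilinI lin_intros)
  note FL = bilin_lin_left[OF F] and FR = bilin_lin_right[OF F]
  have "F one one = bilin_apply (\<lambda>c d. bilin_apply (\<lambda>x y. F (m c x) (m d y)) Rinv) R"
    by (rule bilin_apply_R_Rinv[OF F, symmetric])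
  also have "\<dots> = bilin_apply (\<lambda>c d. bilin_apply (\<lambda>x y. F (m c x) (m (m z d) y)) Rinv) R"
    unfolding z_def by (subst bilin_apply_R_counit_left_R)
        (intro bilinI lin_intros FL FR, simp add: mult_assoc)
  also have "\<dots> = F one (m z one)"
    by (subst bilin_apply_R_Rinv[where G = "\<lambda>a b. F a (m z b)", symmetric])
      (intro bilinI lin_intros FL FR, simp add: mult_assoc)
  finally show ?thesis unfolding F_def z_def by simp
qed

lemma counit_right_R: "bilin_apply (\<lambda>p q k. eps q * p k) R = one"
proof -
  define z where "z = bilin_apply (\<lambda>p q k. eps q * p k) R"
  define F where "F = (\<lambda>(a::'i\<Rightarrow>'k) (b::'i\<Rightarrow>'k) k. eps b * a k)"
  have F: "bilin F" unfolding F_def by (intro bilinI lin_intros)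
  note FL = bilin_lin_left[OF F] and FR = bilin_lin_right[OF F]
  have "F one one = bilin_apply (\<lambda>c d. bilin_apply (\<lambda>x y. F (m c x) (m d y)) Rinv) R"
    by (rule bilin_apply_R_Rinv[OF F, symmetric])
  also have "\<dots> = bilin_apply (\<lambda>c d. bilin_apply (\<lambda>x y. F (m (m z c) x) (m d y)) Rinv) R"
    unfolding z_def by (subst bilin_apply_R_counit_right_R)
        (intro bilinI lin_intros FL FR, simp add: mult_assoc)
  also have "\<dots> = F (m z one) one"
    by (subst bilin_apply_R_Rinv[where G = "\<lambda>a b. F (m z a) b", symmetric])
      (intro bilinI lin_intros FL FR, simp add: mult_assoc)
  finally show ?thesis unfolding F_def z_def by simp
qed

lemma tmap_antipode_id_R: "tmap S (\<lambda>x. x) R = Rinv"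
proof -
  define X where "X = tmap S (\<lambda>x. x) R"
  have "tmul H X R = tone H" (is "?L = ?R")
  proof (rule tensor_eqI)
    fix F :: "('i \<Rightarrow> 'k) \<Rightarrow> ('i \<Rightarrow> 'k) \<Rightarrow> 'i \<Rightarrow> 'k" assume F: "bilin F"
    note FL = bilin_lin_left[OF F] and FR = bilin_lin_right[OF F]
    have "bilin_apply F (tmul H X R) = bilin_apply (\<lambda>p q. bilin_apply (\<lambda>p' q'. F (m p p') (m q q')) R) X"
      by (rule bilin_apply_tmul[OF F])
    also have "\<dots> = bilin_apply (\<lambda>p q. bilin_apply (\<lambda>p' q'. F (m (S p) p') (m q q')) R) R"
    proof -
      have "bilin (\<lambda>p q. bilin_apply (\<lambda>p' q'. F (m p p') (m q q')) R)" by (intro bilinI lin_intros FL FR)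
      then show ?thesis unfolding X_def by (simp add: bilin_apply_tmap lin_antipode lin_id)
    qed
    also have "\<dots> = bilin_apply (\<lambda>p q. bilin_apply (\<lambda>x y. F (m (S x) y) q) (D p)) R"
      by (rule bilin_apply_Delta_id_R[symmetric]) (intro trilinI lin_intros FL FR)
    also have "\<dots> = bilin_apply (\<lambda>p q k. eps p * F one q k) R"
      by (subst antipode_left_lin) (intro lin_intros FL, rule refl)
    also have "\<dots> = F one (bilin_apply (\<lambda>p q k. eps p * q k) R)"
    proof -
      have lg: "lin (\<lambda>w. F one w)" by (intro FR lin_id)
      show ?thesis by (subst bilin_apply_lin_comp[OF lg]) (simp add: lin_scale[OF lg])
    qed
    also have "\<dots> = bilin_apply F (tone H)" by (simp add: counit_left_R bilin_apply_tone[OF F])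
    finally show "bilin_apply F ?L = bilin_apply F ?R" .
  qed
  then show ?thesis unfolding X_def by (rule left_inverse_R_eq_Rinv)
qed

definition Sinv where "Sinv = inv S"

lemma antipode_Sinv[simp]: "S (Sinv x) = x" unfolding Sinv_def using Sbij by (simp add: bij_def surj_f_inv_f)
lemma Sinv_antipode[simp]: "Sinv (S x) = x" unfolding Sinv_def using Sbij by (simp add: bij_def inv_f_f)
lemma antipode_inj: "S x = S y \<Longrightarrow> x = y" using Sbij by (simp add: bij_def inj_eq)

lemma lin_Sinv: "lin Sinv"
proof (rule linI)
  fix x y
  show "Sinv (\<lambda>k. x k + y k) = (\<lambda>k. Sinv x k + Sinv y k)"
    by (rule antipode_inj) (simp add: lin_add[OF lin_antipode, of "Sinv x" "Sinv y"])
next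
  fix c x
  show "Sinv (\<lambda>k. c * x k) = (\<lambda>k. c * Sinv x k)"
    by (rule antipode_inj) (simp add: lin_scale[OF lin_antipode, of c "Sinv x"])
qed

lemma lin_SinvI: "lin f \<Longrightarrow> lin (\<lambda>x. Sinv (f x))"
  by (rule lin_comp[OF lin_Sinv])

lemma Sinv_mult: "Sinv (m a b) = m (Sinv b) (Sinv a)"
  by (rule antipode_inj) (simp add: antipode_mult)

lemma Sinv_one: "Sinv one = one"
  by (rule antipode_inj) (simp add: antipode_one)

lemma antipode_right_Sinv_lin:
  assumes "lin G"
  shows "bilin_apply (\<lambda>p q. G (m q (Sinv p))) (D x) = (\<lambda>k. eps x * G one k)"
proof -
  have "bilin_apply (\<lambda>p q. m q (Sinv p)) (D x) = bilin_apply (\<lambda>p q. Sinv (m p (S q))) (D x)"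
    by (simp add: Sinv_mult)
  also have "\<dots> = Sinv (bilin_apply (\<lambda>p q. m p (S q)) (D x))"
    by (rule bilin_apply_lin_comp[OF lin_Sinv, symmetric])
  also have "\<dots> = (\<lambda>k. eps x * one k)" by (simp add: antipode_right lin_scale[OF lin_Sinv] Sinv_one)
  finally have e: "bilin_apply (\<lambda>p q. m q (Sinv p)) (D x) = (\<lambda>k. eps x * one k)" .
  have "bilin_apply (\<lambda>p q. G (m q (Sinv p))) (D x) = G (bilin_apply (\<lambda>p q. m q (Sinv p)) (D x))"
    by (rule bilin_apply_lin_comp[OF assms, symmetric])
  also have "\<dots> = (\<lambda>k. eps x * G one k)" by (simp only: e lin_scale[OF assms])
  finally show ?thesis .
qed

lemma tmap_id_Sinv_R: "tmap (\<lambda>x. x) Sinv R = Rinv"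
proof -
  define X where "X = tmap (\<lambda>x. x) Sinv R"
  have "tmul H R X = tone H" (is "?L = ?R")
  proof (rule tensor_eqI)
    fix F :: "('i \<Rightarrow> 'k) \<Rightarrow> ('i \<Rightarrow> 'k) \<Rightarrow> 'i \<Rightarrow> 'k" assume F: "bilin F"
    note FL = bilin_lin_left[OF F] and FR = bilin_lin_right[OF F]
    have "bilin_apply F (tmul H R X) = bilin_apply (\<lambda>p q. bilin_apply (\<lambda>p' q'. F (m p p') (m q q')) X) R"
      by (rule bilin_apply_tmul[OF F])
    also have "\<dots> = bilin_apply (\<lambda>p q. bilin_apply (\<lambda>p' q'. F (m p p') (m q (Sinv q'))) R) R"
    proof -
      have "bilin (\<lambda>p' q'. F (m p p') (m q q'))" for p q by (intro bilinI lin_intros FL FR)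
      then show ?thesis unfolding X_def by (simp add: bilin_apply_tmap lin_Sinv lin_id)
    qed
    also have "\<dots> = bilin_apply (\<lambda>p q. bilin_apply (\<lambda>x y. F p (m y (Sinv x))) (D q)) R"
      by (rule bilin_apply_id_Delta_R[symmetric]) (intro trilinI lin_intros FL FR lin_SinvI)
    also have "\<dots> = bilin_apply (\<lambda>p q k. eps q * F p one k) R"
      by (subst antipode_right_Sinv_lin) (intro lin_intros FR, rule refl)
    also have "\<dots> = F (bilin_apply (\<lambda>p q k. eps q * p k) R) one"
    proof -
      have lg: "lin (\<lambda>w. F w one)" by (intro FL lin_id)
      show ?thesis by (subst bilin_apply_lin_comp[OF lg]) (simp add: lin_scale[OF lg])
    qed
    also have "\<dots> = bilin_apply F (tone H)" by (simp add: counit_right_R bilin_apply_tone[OF F])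
    finally show "bilin_apply F ?L = bilin_apply F ?R" .
  qed
  then show ?thesis unfolding X_def by (rule right_inverse_R_eq_Rinv)
qed

lemma tmap_antipode_tmul: "tmap S S (tmul H X Y) = tmul H (tmap S S Y) (tmap S S X)" (is "?L = ?R")
proof (rule tensor_eqI)
  fix F :: "('i \<Rightarrow> 'k) \<Rightarrow> ('i \<Rightarrow> 'k) \<Rightarrow> 'i \<Rightarrow> 'k" assume F: "bilin F"
  note FL = bilin_lin_left[OF F] and FR = bilin_lin_right[OF F]
  have b1: "bilin (\<lambda>p q. F (S p) (S q))" by (intro bilinI FL FR lin_intros)
  have b2: "bilin (\<lambda>p q. bilin_apply (\<lambda>p' q'. F (m p p') (m q q')) (tmap S S X))"
    by (intro bilinI FL FR lin_intros)
  have b3: "bilin (\<lambda>p' q'. F (m p p') (m q q'))" for p q by (intro bilinI FL FR lin_intros)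
  have b4: "bilin (\<lambda>p q. bilin_apply (\<lambda>p' q'. F (m p (S p')) (m q (S q'))) X)"
    by (intro bilinI FL FR lin_intros)
  have "bilin_apply F (tmap S S (tmul H X Y))
      = bilin_apply (\<lambda>p q. bilin_apply (\<lambda>p' q'. F (S (m p p')) (S (m q q'))) Y) X"
    by (simp add: bilin_apply_tmap F b1 lin_antipode bilin_apply_tmul)
  also have "\<dots> = bilin_apply (\<lambda>p' q'. bilin_apply (\<lambda>p q. F (m (S p') (S p)) (m (S q') (S q))) X) Y"
    by (subst bilin_apply_swap) (simp add: antipode_mult)
  also have "\<dots> = bilin_apply F (tmul H (tmap S S Y) (tmap S S X))"
    by (simp add: bilin_apply_tmul F bilin_apply_tmap b2 b3 b4 lin_antipode)
  finally show "bilin_apply F ?L = bilin_apply F ?R" .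
qed

lemma tmap_antipode_tone: "tmap S S (tone H) = tone H"
proof (rule tensor_eqI)
  fix F :: "('i \<Rightarrow> 'k) \<Rightarrow> ('i \<Rightarrow> 'k) \<Rightarrow> 'i \<Rightarrow> 'k" assume F: "bilin F"
  note FL = bilin_lin_left[OF F] and FR = bilin_lin_right[OF F]
  have b1: "bilin (\<lambda>p q. F (S p) (S q))" by (intro bilinI FL FR lin_intros)
  show "bilin_apply F (tmap S S (tone H)) = bilin_apply F (tone H)"
    by (simp add: bilin_apply_tmap F b1 lin_antipode bilin_apply_tone antipode_one)
qed

lemma tmap_antipode_R: "tmap S S R = R"
proof -
  have "tmap S S R = tmap (\<lambda>x. x) S (tmap S (\<lambda>x. x) R)"
    by (simp add: tmap_comp lin_antipode lin_id)
  also have "\<dots> = tmap (\<lambda>x. x) S (tmap (\<lambda>x. x) Sinv R)" by (simp add: tmap_antipode_id_R tmap_id_Sinv_R)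
  also have "\<dots> = R" by (simp add: tmap_comp lin_antipode lin_id lin_Sinv tmap_id)
  finally show ?thesis .
qed

lemma tmap_antipode_Rinv: "tmap S S Rinv = Rinv"
proof (rule left_inverse_R_eq_Rinv)
  have "tmul H (tmap S S Rinv) R = tmul H (tmap S S Rinv) (tmap S S R)" by (simp add: tmap_antipode_R)
  also have "\<dots> = tmap S S (tmul H R Rinv)" by (simp add: tmap_antipode_tmul)
  finally show "tmul H (tmap S S Rinv) R = tone H" by (simp add: R_Rinv tmap_antipode_tone)
qed

abbreviation u where "u \<equiv> drinfeld H R"

text \<open>Via \<open>R \<Delta>(p) = \<Delta>\<^sup>o\<^sup>p(p) R\<close>:
  \<open>S(R\<^sub>2 p\<^sub>2) R\<^sub>1 p\<^sub>1 = S(R\<^sub>2) S(p\<^sub>1) p\<^sub>2 R\<^sub>1 = \<epsilon>(p) u\<close>.\<close>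

lemma drinfeld_Delta_collapse:
  "bilin_apply (\<lambda>y1 y2. bilin_apply (\<lambda>r1 r2. m (S (m r2 y2)) (m r1 y1)) R) (D p) = (\<lambda>k. eps p * u k)"
proof -
  define F where "F = (\<lambda>(a::'i\<Rightarrow>'k) b. m (S b) a)"
  have F: "bilin F" unfolding F_def by (intro bilinI lin_intros)
  have "bilin_apply (\<lambda>y1 y2. bilin_apply (\<lambda>r1 r2. F (m r1 y1) (m r2 y2)) R) (D p)
      = bilin_apply (\<lambda>r1 r2. bilin_apply (\<lambda>y1 y2. F (m r1 y1) (m r2 y2)) (D p)) R"
    by (rule bilin_apply_swap)
  also have "\<dots> = bilin_apply F (tmul H R (D p))" by (rule bilin_apply_tmul[OF F, symmetric])
  also have "\<dots> = bilin_apply F (tmul H (tau (D p)) R)" by (simp only: tmul_tau_Delta_R)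
  also have "\<dots> = bilin_apply (\<lambda>a b. bilin_apply (\<lambda>r1 r2. F (m b r1) (m a r2)) R) (D p)"
    by (simp only: bilin_apply_tmul[OF F] bilin_apply_tau)
  also have "\<dots> = bilin_apply (\<lambda>a b. bilin_apply (\<lambda>r1 r2. m (S r2) (m (m (S a) b) r1)) R) (D p)"
    by (simp add: F_def antipode_mult mult_assoc)
  also have "\<dots> = (\<lambda>k. eps p * bilin_apply (\<lambda>r1 r2. m (S r2) (m one r1)) R k)"
    by (rule antipode_left_lin[of "\<lambda>w. bilin_apply (\<lambda>r1 r2. m (S r2) (m w r1)) R"]) (intro lin_intros)
  finally show ?thesis by (simp add: F_def drinfeld_def)
qed

text \<open>Both sides equal \<open>S\<^sup>2(y\<^sub>3) S(R\<^sub>2 y\<^sub>2) R\<^sub>1 y\<^sub>1\<close>.\<close>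

lemma u_mult: "m u y = m (S (S y)) u"
proof -
  define E where "E = trilin_apply (\<lambda>y1 y2 y3.
    m (S (S y3)) (bilin_apply (\<lambda>r1 r2. m (S (m r2 y2)) (m r1 y1)) R)) (Delta_id H (D y))"
  have collapse_R: "bilin_apply (\<lambda>r1 r2. m (S (m r2 y2)) (m r1 p)) R = m (S y2) (m u p)" for y2 p
  proof -
    have lg: "lin (\<lambda>w. m (S y2) (m w p))" by (intro lin_intros)
    have "bilin_apply (\<lambda>r1 r2. m (S (m r2 y2)) (m r1 p)) R
        = bilin_apply (\<lambda>r1 r2. m (S y2) (m (m (S r2) r1) p)) R"
      by (simp add: antipode_mult mult_assoc)
    also have "\<dots> = m (S y2) (m u p)" unfolding drinfeld_def by (rule bilin_apply_lin_comp[OF lg, symmetric])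
    finally show ?thesis .
  qed
  have "E = bilin_apply (\<lambda>p q. bilin_apply (\<lambda>y2 y3. m (S (m y2 (S y3))) (m u p)) (D q)) (D y)"
    unfolding E_def coassoc trilin_apply_id_Delta
    by (simp only: collapse_R) (simp add: antipode_mult mult_assoc)
  also have "\<dots> = bilin_apply (\<lambda>p q k. eps q * m u p k) (D y)"
    by (subst antipode_right_lin[of "\<lambda>w. m (S w) (m u _)"]) (intro lin_intros, simp add: antipode_one)
  also have "\<dots> = m u y"
    by (rule counit_right_lin) (intro lin_intros)
  finally have "E = m u y" .
  have "E = bilin_apply (\<lambda>p y3. m (S (S y3))
      (bilin_apply (\<lambda>y1 y2. bilin_apply (\<lambda>r1 r2. m (S (m r2 y2)) (m r1 y1)) R) (D p))) (D y)"
    unfolding E_def trilin_apply_Delta_id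
    by (subst bilin_apply_lin_comp[symmetric]) (intro lin_intros, rule refl)
  also have "\<dots> = bilin_apply (\<lambda>p y3 k. eps p * m (S (S y3)) u k) (D y)"
    by (simp add: drinfeld_Delta_collapse lin_scale[OF lin_vmul2[OF lin_id]])
  also have "\<dots> = m (S (S y)) u"
    by (rule counit_left_lin[of "\<lambda>y3. m (S (S y3)) u"]) (intro lin_intros)
  finally show ?thesis using \<open>E = m u y\<close> by simp
qed

definition w where "w = bilin_apply (\<lambda>p q. m (S (S p)) q) R"

lemma antipode_w: "S w = bilin_apply (\<lambda>p q. m (S q) (S (S p))) Rinv"
proof -
  have "bilin (\<lambda>p q. m (S p) q)" by (intro bilinI lin_intros)
  then have "w = bilin_apply (\<lambda>p q. m (S p) q) Rinv"
    unfolding w_def tmap_antipode_id_R[symmetric] by (simp add: bilin_apply_tmap lin_antipode lin_id)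
  then show ?thesis by (simp add: bilin_apply_lin_comp[OF lin_antipode] antipode_mult)
qed

lemma bilin_apply_Rinv_antipode2:
  assumes G: "bilin G"
  shows "bilin_apply (\<lambda>p q. G (S (S p)) (S (S q))) Rinv = bilin_apply G Rinv"
proof -
  have Rinv_antipode: "bilin_apply (\<lambda>p q. F (S p) (S q)) Rinv = bilin_apply F Rinv" if "bilin F" for F
    using bilin_apply_tmap[OF that lin_antipode lin_antipode, of Rinv] tmap_antipode_Rinv by simp
  have "bilin (\<lambda>a b. G (S a) (S b))"
    by (intro bilinI bilin_lin_left[OF G] bilin_lin_right[OF G] lin_intros)
  from Rinv_antipode[OF this] Rinv_antipode[OF G] show ?thesis by simp
qed

lemma antipode_w_mult_u: "m (S w) u = one"
proof -
  have "m (S w) u = bilin_apply (\<lambda>p q. m (m (S q) (S (S p))) u) Rinv"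
    unfolding antipode_w by (rule bilin_apply_lin_comp) (intro lin_intros)
  also have "\<dots> = bilin_apply (\<lambda>p q. m (S q) (m u p)) Rinv"
    by (simp add: mult_assoc u_mult)
  also have "\<dots> = bilin_apply (\<lambda>p q. bilin_apply (\<lambda>p' q'. m (S q) (m (S q') (m p' p))) R) Rinv"
    unfolding drinfeld_def
    by (subst bilin_apply_lin_comp[of "\<lambda>z. m (S _) (m z _)"]) (intro lin_intros, simp add: mult_assoc)
  also have "\<dots> = bilin_apply (\<lambda>p' q'. bilin_apply (\<lambda>p q. m (S (m q' q)) (m p' p)) Rinv) R"
    by (subst bilin_apply_swap) (simp add: antipode_mult mult_assoc)
  also have "\<dots> = one"
    by (subst bilin_apply_R_Rinv[of "\<lambda>a b. m (S b) a"]) (intro bilinI lin_intros, simp add: antipode_one)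
  finally show ?thesis .
qed

lemma u_mult_antipode_w: "m u (S w) = one"
proof -
  have "m u (S w) = bilin_apply (\<lambda>p q. m u (m (S q) (S (S p)))) Rinv"
    unfolding antipode_w by (rule bilin_apply_lin_comp) (intro lin_intros)
  also have "\<dots> = bilin_apply (\<lambda>p q. m (S (S (S q))) (m u (S (S p)))) Rinv"
  proof -
    have "m u (m (S q) z) = m (S (S (S q))) (m u z)" for q z
      by (simp only: mult_assoc[symmetric] u_mult[of "S q"])
    then show ?thesis by (simp only:)
  qed
  also have "\<dots> = bilin_apply (\<lambda>p q. bilin_apply (\<lambda>p' q'. m (S (S (S q))) (m (S q') (m p' (S (S p))))) R) Rinv"
    unfolding drinfeld_def
    by (subst bilin_apply_lin_comp[of "\<lambda>z. m (S (S (S _))) (m z _)"]) (intro lin_intros, simp add: mult_assoc)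
  also have "\<dots> = bilin_apply (\<lambda>p' q'. bilin_apply (\<lambda>p q. m (S q) (m (S q') (m p' p))) Rinv) R"
    by (subst bilin_apply_swap)
      (simp add: bilin_apply_Rinv_antipode2[of "\<lambda>a b. m (S b) (m (S _) (m _ a))"] bilinI lin_intros)
  also have "\<dots> = bilin_apply (\<lambda>p' q'. bilin_apply (\<lambda>p q. m (S (m q' q)) (m p' p)) Rinv) R"
    by (simp add: antipode_mult mult_assoc)
  also have "\<dots> = one"
    by (subst bilin_apply_R_Rinv[of "\<lambda>a b. m (S b) a"]) (intro bilinI lin_intros, simp add: antipode_one)
  finally show ?thesis .
qed

lemma antipode_w_mult_antipode2: "m (S w) (S (S y)) = m y (S w)"
proof -
  have "m (S w) (S (S y)) = m (S w) (m (S (S y)) (m u (S w)))" by (simp add: u_mult_antipode_w)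
  also have "\<dots> = m (m (S w) (m u y)) (S w)" by (simp add: mult_assoc u_mult)
  also have "\<dots> = m y (S w)" by (simp add: mult_assoc[symmetric] antipode_w_mult_u)
  finally show ?thesis .
qed

lemma tS_eq: "tS H R a = bilin_apply (\<lambda>p q. m (S p) (m (S a) (m w q))) R"
proof -
  have inner: "m (S (bilin_apply (\<lambda>x y. m (m (S x) a) y) (D p)))
      = (\<lambda>q. bilin_apply (\<lambda>x y. m (S y) (m (S a) (m (S (S x)) q))) (D p))" for p
  proof
    fix q
    have "m (S (bilin_apply (\<lambda>x y. m (m (S x) a) y) (D p))) q
        = bilin_apply (\<lambda>x y. m (S (m (m (S x) a) y)) q) (D p)"
      by (subst bilin_apply_lin_comp[OF lin_antipode], subst bilin_apply_lin_comp)
          (intro lin_intros, rule refl)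
    then show "m (S (bilin_apply (\<lambda>x y. m (m (S x) a) y) (D p))) q
        = bilin_apply (\<lambda>x y. m (S y) (m (S a) (m (S (S x)) q))) (D p)"
      by (simp add: antipode_mult mult_assoc)
  qed
  have "tS H R a = bilin_apply (\<lambda>p q. bilin_apply (\<lambda>x y. m (S y) (m (S a) (m (S (S x)) q))) (D p)) R"
    unfolding tS_def by (simp only: inner)
  also have "\<dots> = bilin_apply (\<lambda>p q. bilin_apply (\<lambda>p' q'. m (S p') (m (S a) (m (S (S p)) (m q q')))) R) R"
    by (rule bilin_apply_Delta_id_R) (intro trilinI lin_intros)
  also have "\<dots> = bilin_apply (\<lambda>p' q'. bilin_apply (\<lambda>p q. m (S p') (m (S a) (m (m (S (S p)) q) q'))) R) R"
    by (subst bilin_apply_swap) (simp add: mult_assoc)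
  also have "\<dots> = bilin_apply (\<lambda>p q. m (S p) (m (S a) (m w q))) R"
    unfolding w_def
    by (subst bilin_apply_lin_comp[of "\<lambda>z. m (S _) (m (S a) (m z _))"]) (intro lin_intros, rule refl)
  finally show ?thesis .
qed

lemma antipode_tS: "S (tS H R a) = bilin_apply (\<lambda>p q. m (S q) (m a (m p (S w)))) R"
proof -
  have "S (tS H R a) = bilin_apply (\<lambda>p q. S (m (S p) (m (S a) (m w q)))) R"
    unfolding tS_eq by (rule bilin_apply_lin_comp[OF lin_antipode])
  also have "\<dots> = bilin_apply (\<lambda>p q. m (S q) (m (S w) (S (S (m a p))))) R"
    by (simp add: antipode_mult mult_assoc)
  also have "\<dots> = bilin_apply (\<lambda>p q. m (S q) (m a (m p (S w)))) R"
    by (simp only: antipode_w_mult_antipode2 mult_assoc)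
  finally show ?thesis .
qed

lemma tS_tS_eq: "tS H R (tS H R a) = bilin_apply (\<lambda>p' q'.
    bilin_apply (\<lambda>p q. m (S p') (m (S q) (m a (m p (m (m (S w) w) q'))))) R) R"
proof -
  have "tS H R (tS H R a)
      = bilin_apply (\<lambda>p' q'. m (S p') (m (bilin_apply (\<lambda>p q. m (S q) (m a (m p (S w)))) R) (m w q'))) R"
    unfolding tS_eq[of "tS H R a"] antipode_tS by (simp add: mult_assoc)
  also have "\<dots> = bilin_apply (\<lambda>p' q'.
      bilin_apply (\<lambda>p q. m (S p') (m (S q) (m a (m p (m (m (S w) w) q'))))) R) R"
    by (subst bilin_apply_lin_comp[of "\<lambda>z. m (S _) (m z (m w _))"]) (intro lin_intros, simp add: mult_assoc)
  finally show ?thesis .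
qed

end

locale ribbon_hopf = quasitriangular_hopf H R for H :: "('k::field, 'i::finite) hopf" and R +
  fixes v :: "'i \<Rightarrow> 'k"
  assumes rib: "ribbon H R v"
begin

lemma v_central: "m v x = m x v"
  using rib unfolding ribbon_def by blast

lemma antipode_v: "S v = v"
  using rib unfolding ribbon_def by blast

lemma Delta_v: "D v = tmul H (tens v v) (monodromy H R)"
  using rib unfolding ribbon_def by blast

lemma v2_mult_u_Su: "m (m v v) (m u (S u)) = one"
  and u_Su_mult_v2: "m (m u (S u)) (m v v) = one"
  using rib unfolding ribbon_def Let_def by blast+

lemma v2_central: "m (m v v) x = m x (m v v)"
  by (metis mult_assoc v_central)

lemma u_Su_central: "m (m u (S u)) x = m x (m u (S u))"
proof -
  have "m (m u (S u)) x = m (m u (S u)) (m x (m (m v v) (m u (S u))))"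
    by (simp add: v2_mult_u_Su)
  also have "\<dots> = m (m u (S u)) (m (m (m v v) x) (m u (S u)))"
    by (metis v2_central mult_assoc)
  also have "\<dots> = m (m (m u (S u)) (m v v)) (m x (m u (S u)))"
    by (simp only: mult_assoc)
  finally show ?thesis by (simp add: u_Su_mult_v2)
qed

lemma Su_mult_u: "m (S u) u = m u (S u)"
proof -
  have "m u (m (S u) u) = m u (m u (S u))"
    using u_Su_central[of u] by (simp add: mult_assoc)
  then have "m (S w) (m u (m (S u) u)) = m (S w) (m u (m u (S u)))" by simp
  then show ?thesis by (simp add: mult_assoc[symmetric] antipode_w_mult_u)
qed

lemma Su_mult_w: "m (S u) w = one"
proof -
  have S2w: "S (S w) = m u (m w (S w))"
  proof -
    have "S (S w) = m (m (S (S w)) u) (S w)" by (simp add: mult_assoc u_mult_antipode_w)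
    then show ?thesis by (simp only: u_mult[of w, symmetric] mult_assoc)
  qed
  have "m (S u) (S (S w)) = one"
    using arg_cong[OF antipode_w_mult_u, of S] by (simp add: antipode_mult antipode_one)
  then have "m u (m (S u) (m w (S w))) = one"
    unfolding S2w by (simp add: mult_assoc[symmetric] Su_mult_u)
  then have "m (S u) (m w (S w)) = S w"
    by (metis antipode_w_mult_u mult_assoc mult_one_left mult_one_right)
  then have "m (m (S u) (m w (S w))) u = m (S w) u" by simp
  then show ?thesis by (simp add: mult_assoc antipode_w_mult_u)
qed

text \<open>\<open>S(w) w = u\<^sup>-\<^sup>1 S(u)\<^sup>-\<^sup>1 = (u S(u))\<^sup>-\<^sup>1 = v\<^sup>2\<close>.\<close>

lemma antipode_w_mult_w: "m (S w) w = m v v"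
proof -
  have "m (m u (S u)) (m (S w) w) = m (S u) (m (m u (S w)) w)"
    by (simp add: Su_mult_u[symmetric] mult_assoc)
  also have "\<dots> = one"
    by (simp add: u_mult_antipode_w Su_mult_w)
  finally have "m (m u (S u)) (m (S w) w) = one" .
  then have "m v v = m (m v v) (m (m u (S u)) (m (S w) w))" by simp
  also have "\<dots> = m (S w) w" by (subst mult_assoc[symmetric]) (simp add: v2_mult_u_Su)
  finally show ?thesis by simp
qed

lemma right_adjoint_v_eq:
  "bilin_apply (\<lambda>x y. m (m (S x) a) y) (D v) = bilin_apply (\<lambda>p' q'.
     bilin_apply (\<lambda>p q. m (S p') (m (S q) (m a (m p (m q' (m v v)))))) R) R"
proof -
  define F where "F = (\<lambda>x y. m (m (S x) a) y)"
  define G where "G = (\<lambda>x y. m (S x) (m a (m y (m v v))))"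
  have F: "bilin F" unfolding F_def by (intro bilinI lin_intros)
  have G: "bilin G" unfolding G_def by (intro bilinI lin_intros)
  have F_v: "F (m v p) (m v q) = G p q" for p q
  proof -
    have "F (m v p) (m v q) = m (S p) (m (m v a) (m v q))"
      unfolding F_def by (simp add: antipode_mult antipode_v mult_assoc)
    also have "\<dots> = m (S p) (m a (m (m v v) q))"
      by (simp add: v_central[of a] mult_assoc)
    also have "\<dots> = G p q"
      unfolding G_def by (simp only: v2_central)
    finally show ?thesis .
  qed
  have "bilin_apply F (D v) = bilin_apply (\<lambda>p q. F (m v p) (m v q)) (monodromy H R)"
    unfolding Delta_v bilin_apply_tmul[OF F]
    by (rule bilin_apply_tens) (unfold F_def, intro bilinI lin_intros)
  also have "\<dots> = bilin_apply (\<lambda>p q. bilin_apply (\<lambda>p' q'. G (m q p') (m p q')) R) R"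
    unfolding F_v monodromy_def bilin_apply_tmul[OF G] bilin_apply_tau ..
  also have "\<dots> = bilin_apply (\<lambda>p' q'.
      bilin_apply (\<lambda>p q. m (S p') (m (S q) (m a (m p (m q' (m v v)))))) R) R"
    unfolding G_def by (subst bilin_apply_swap) (simp add: antipode_mult mult_assoc v2_central)
  finally show ?thesis unfolding F_def .
qed

lemma tS_tS: "tS H R (tS H R a) = bilin_apply (\<lambda>x y. m (m (S x) a) y) (D v)"
  unfolding tS_tS_eq right_adjoint_v_eq antipode_w_mult_w v2_central ..

end

theorem mainTheorem6:
  fixes H :: "('k::field, 'i::finite) hopf"
    and R :: "'i \<Rightarrow> 'i \<Rightarrow> 'k"
    and v :: "'i \<Rightarrow> 'k"
    and a :: "'i \<Rightarrow> 'k"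
  assumes "is_hopf H"
    and "bij (vS H)"
    and "quasitriangular H R"
    and "ribbon H R v"
    and "factorizable H R"
  shows "tS H R (tS H R a) = bilin_apply (\<lambda>x y. vmul H (vmul H (vS H x) a) y) (vDelta H v)"
proof -
  interpret ribbon_hopf H R v
    by unfold_locales (use assms in auto)
  show ?thesis by (rule tS_tS)
qed

end
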